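(* Assume $\alpha,\beta>1$, $\lambda>0$ and $a,b$ satisfy $(A_1)$, $(A_2)$. Then $J_\lambda$ satisfies the Palais–Smale condition $(PS)_c$ for every $c\in\mathbb{R}$: every sequence $\{(u_k,v_k)\}\subset H_\lambda$ with $J_\lambda(u_k,v_k)\to c$ and $J_\lambda'(u_k,v_k)\to0$ in $H_\lambda^*$ is bounded in $H_\lambda$ and has a subsequence converging strongly in $H_\lambda$.
   Context: $G=(V,E)$ locally finite connected graph with symmetric weights $w_{xy}>0$ and measure $\mu\ge\mu_{\min}>0$; $\Gamma(u,v)(x)=\frac1{2\mu(x)}\sum_{y\sim x}w_{xy}(u(y)-u(x))(v(y)-v(x))$, $|\nabla u|^2=\Gamma(u,u)$, $\int_Vf\,d\mu=\sum_x\mu(x)f(x)$. $(A_1)$: $a,b\ge0$, with $\{a=0\}$, $\{b=0\}$ and their intersection non-empty bounded domains. $(A_2)$: for some $x_0$, $a(x),b(x)\to+\infty$ as $d(x,x_0)\to\infty$. $H_\lambda=\{(u,v)\in W^{1,2}(V)^2:\int_V(\lambda au^2+\lambda bv^2)d\mu<\infty\}$ with $\|(u,v)\|_{H_\lambda}^2=\int_V(|\nabla u|^2+|\nabla v|^2+(\lambda a+1)u^2+(\lambda b+1)v^2)d\mu$. $J_\lambda(u,v)=\frac12\|(u,v)\|_{H_\lambda}^2-\frac1{\alpha+\beta}\int_V|u|^\alpha|v|^\beta d\mu$, a $C^1$ functional on $H_\lambda$. *)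

theory Defs
  imports "HOL-Analysis.Analysis"
begin

definition adj :: "('v \<Rightarrow> 'v \<Rightarrow> real) \<Rightarrow> 'v \<Rightarrow> 'v \<Rightarrow> bool" where
  "adj w x y \<longleftrightarrow> w x y > 0"

definition walk :: "('v \<Rightarrow> 'v \<Rightarrow> real) \<Rightarrow> nat \<Rightarrow> (nat \<Rightarrow> 'v) \<Rightarrow> 'v \<Rightarrow> 'v \<Rightarrow> bool" where
  "walk w n f x y \<longleftrightarrow> f 0 = x \<and> f n = y \<and> (\<forall>i<n. adj w (f i) (f (Suc i)))"

definition weighted_graph :: "('v \<Rightarrow> 'v \<Rightarrow> real) \<Rightarrow> ('v \<Rightarrow> real) \<Rightarrow> bool" where
  "weighted_graph w mu \<longleftrightarrow>
     (\<forall>x y. w x y = w y x) \<and> (\<forall>x y. w x y \<ge> 0) \<and>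
     (\<forall>x. finite {y. adj w x y}) \<and>
     (\<forall>x y. \<exists>n f. walk w n f x y) \<and>
     (\<exists>mu_min>0. \<forall>x. mu x \<ge> mu_min)"

definition gdist :: "('v \<Rightarrow> 'v \<Rightarrow> real) \<Rightarrow> 'v \<Rightarrow> 'v \<Rightarrow> nat" where
  "gdist w x y = (LEAST n. \<exists>f. walk w n f x y)"

definition bounded_domain :: "('v \<Rightarrow> 'v \<Rightarrow> real) \<Rightarrow> 'v set \<Rightarrow> bool" where
  "bounded_domain w \<Omega> \<longleftrightarrow> \<Omega> \<noteq> {} \<and>
     (\<exists>x0 R. \<forall>x\<in>\<Omega>. gdist w x0 x \<le> R) \<and>
     (\<forall>x\<in>\<Omega>. \<forall>y\<in>\<Omega>. \<exists>n f. walk w n f x y \<and> (\<forall>i\<le>n. f i \<in> \<Omega>))"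

definition Gam :: "('v \<Rightarrow> 'v \<Rightarrow> real) \<Rightarrow> ('v \<Rightarrow> real) \<Rightarrow> ('v \<Rightarrow> real) \<Rightarrow> ('v \<Rightarrow> real) \<Rightarrow> 'v \<Rightarrow> real" where
  "Gam w mu u v x = 1 / (2 * mu x) * (\<Sum>y\<in>{y. adj w x y}. w x y * (u y - u x) * (v y - v x))"

definition grad2 :: "('v \<Rightarrow> 'v \<Rightarrow> real) \<Rightarrow> ('v \<Rightarrow> real) \<Rightarrow> ('v \<Rightarrow> real) \<Rightarrow> 'v \<Rightarrow> real" where
  "grad2 w mu u = Gam w mu u u"

definition integrable_V :: "('v \<Rightarrow> real) \<Rightarrow> ('v \<Rightarrow> real) \<Rightarrow> bool" where
  "integrable_V mu f \<longleftrightarrow> (\<lambda>x. mu x * f x) summable_on UNIV"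

definition integral_V :: "('v \<Rightarrow> real) \<Rightarrow> ('v \<Rightarrow> real) \<Rightarrow> real" where
  "integral_V mu f = infsum (\<lambda>x. mu x * f x) UNIV"

definition W12 :: "('v \<Rightarrow> 'v \<Rightarrow> real) \<Rightarrow> ('v \<Rightarrow> real) \<Rightarrow> ('v \<Rightarrow> real) \<Rightarrow> bool" where
  "W12 w mu u \<longleftrightarrow> integrable_V mu (\<lambda>x. grad2 w mu u x + (u x)\<^sup>2)"

type_synonym 'v pairfun = "('v \<Rightarrow> real) \<times> ('v \<Rightarrow> real)"

definition H_lam :: "('v \<Rightarrow> 'v \<Rightarrow> real) \<Rightarrow> ('v \<Rightarrow> real) \<Rightarrow> ('v \<Rightarrow> real) \<Rightarrow> ('v \<Rightarrow> real) \<Rightarrow> real \<Rightarrow> 'v pairfun set" where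
  "H_lam w mu a b lam = {(u, v). W12 w mu u \<and> W12 w mu v \<and>
      integrable_V mu (\<lambda>x. lam * a x * (u x)\<^sup>2 + lam * b x * (v x)\<^sup>2)}"

definition H_norm :: "('v \<Rightarrow> 'v \<Rightarrow> real) \<Rightarrow> ('v \<Rightarrow> real) \<Rightarrow> ('v \<Rightarrow> real) \<Rightarrow> ('v \<Rightarrow> real) \<Rightarrow> real \<Rightarrow> 'v pairfun \<Rightarrow> real" where
  "H_norm w mu a b lam p = sqrt (integral_V mu (\<lambda>x.
      grad2 w mu (fst p) x + grad2 w mu (snd p) x
      + (lam * a x + 1) * (fst p x)\<^sup>2 + (lam * b x + 1) * (snd p x)\<^sup>2))"

definition padd :: "'v pairfun \<Rightarrow> 'v pairfun \<Rightarrow> 'v pairfun" where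
  "padd p q = ((\<lambda>x. fst p x + fst q x), (\<lambda>x. snd p x + snd q x))"

definition psub :: "'v pairfun \<Rightarrow> 'v pairfun \<Rightarrow> 'v pairfun" where
  "psub p q = ((\<lambda>x. fst p x - fst q x), (\<lambda>x. snd p x - snd q x))"

definition pscale :: "real \<Rightarrow> 'v pairfun \<Rightarrow> 'v pairfun" where
  "pscale c p = ((\<lambda>x. c * fst p x), (\<lambda>x. c * snd p x))"

definition J_lam :: "('v \<Rightarrow> 'v \<Rightarrow> real) \<Rightarrow> ('v \<Rightarrow> real) \<Rightarrow> ('v \<Rightarrow> real) \<Rightarrow> ('v \<Rightarrow> real) \<Rightarrow> real \<Rightarrow> real \<Rightarrow> real \<Rightarrow> 'v pairfun \<Rightarrow> real" where
  "J_lam w mu a b lam \<alpha> \<beta> p = 1/2 * (H_norm w mu a b lam p)\<^sup>2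
      - 1 / (\<alpha> + \<beta>) * integral_V mu (\<lambda>x. \<bar>fst p x\<bar> powr \<alpha> * \<bar>snd p x\<bar> powr \<beta>)"

definition frechet_deriv_H ::
  "'v pairfun set \<Rightarrow> ('v pairfun \<Rightarrow> real) \<Rightarrow> ('v pairfun \<Rightarrow> real) \<Rightarrow> 'v pairfun \<Rightarrow> ('v pairfun \<Rightarrow> real) \<Rightarrow> bool" where
  "frechet_deriv_H H nrm F p D \<longleftrightarrow>
     (\<forall>h\<in>H. \<forall>k\<in>H. D (padd h k) = D h + D k) \<and>
     (\<forall>c. \<forall>h\<in>H. D (pscale c h) = c * D h) \<and>
     (\<exists>C. \<forall>h\<in>H. \<bar>D h\<bar> \<le> C * nrm h) \<and>
     (\<forall>\<epsilon>>0. \<exists>\<delta>>0. \<forall>h\<in>H. nrm h < \<delta> \<longrightarrow>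
          \<bar>F (padd p h) - F p - D h\<bar> \<le> \<epsilon> * nrm h)"

definition dual_norm :: "'v pairfun set \<Rightarrow> ('v pairfun \<Rightarrow> real) \<Rightarrow> ('v pairfun \<Rightarrow> real) \<Rightarrow> real" where
  "dual_norm H nrm D = (SUP h \<in> {h\<in>H. nrm h \<le> 1}. \<bar>D h\<bar>)"

end

theory Submission
  imports Defs "HOL-Library.Diagonal_Subsequence"
begin

text \<open>A Palais--Smale sequence has bounded energy, since
  \<open>J p - J' p p / (\<alpha> + \<beta>) = (1/2 - 1/(\<alpha> + \<beta>)) \<parallel>p\<parallel>\<^sup>2\<close> while the left-hand side grows at most
  linearly in \<open>\<parallel>p\<parallel>\<close>. As \<open>mu \<ge> mu_min > 0\<close>, bounded energy bounds the functions pointwise, so a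
  diagonal subsequence converges pointwise on the countably many vertices, to a limit \<open>q\<close> of finite
  energy by Fatou's lemma. By \<open>(A\<^sub>2)\<close> the \<open>L\<^sup>2\<close> mass outside a finite set is uniformly small,
  so the subsequence converges to \<open>q\<close> in \<open>L\<^sup>2\<close>. The coupling term is Lipschitz for the \<open>L\<^sup>2\<close> norm on
  sets of bounded energy, hence \<open>J' p\<^sub>k (q - p\<^sub>k)\<close> and the inner product \<open>\<langle>p\<^sub>k, q - p\<^sub>k\<rangle>\<close> have the same
  limit, namely \<open>0\<close>. Lower semicontinuity of the energy then gives \<open>\<parallel>p\<^sub>k - q\<parallel> \<longrightarrow> 0\<close>.\<close>

section \<open>Real inequalities\<close>

lemma powr_diff_le:
  fixes r s R \<alpha> :: real
  assumes a: "\<alpha> \<ge> 1" and s: "0 \<le> s" "s \<le> r" and r: "r \<le> R"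
  shows "r powr \<alpha> - s powr \<alpha> \<le> \<alpha> * R powr (\<alpha> - 1) * (r - s)"
proof (cases "s = r")
  case True then show ?thesis by simp
next
  case False
  then have sr: "s < r" using s by simp
  have Rm: "r powr (\<alpha> - 1) \<le> R powr (\<alpha> - 1)" using a s r by (intro powr_mono2) auto
  show ?thesis
  proof (cases "s = 0")
    case True
    have "r powr \<alpha> = r powr (\<alpha> - 1) * r"
      using s powr_add[of r "\<alpha> - 1" 1] by simp
    also have "\<dots> \<le> R powr (\<alpha> - 1) * r" using Rm s by (intro mult_right_mono) auto
    also have "\<dots> \<le> \<alpha> * R powr (\<alpha> - 1) * r"
      using mult_right_mono[OF a, of "R powr (\<alpha> - 1) * r"] s by (simp add: mult.assoc)
    finally show ?thesis using True a by simp
  next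
    case False
    then have s0: "s > 0" using s by simp
    have "\<exists>z. s < z \<and> z < r \<and> r powr \<alpha> - s powr \<alpha> = (r - s) * (\<alpha> * z powr (\<alpha> - 1))"
      by (rule MVT2[OF sr]) (use s0 in \<open>auto intro!: has_real_derivative_powr\<close>)
    then obtain z where z: "s < z" "z < r" "r powr \<alpha> - s powr \<alpha> = (r - s) * (\<alpha> * z powr (\<alpha> - 1))"
      by blast
    have "z powr (\<alpha> - 1) \<le> R powr (\<alpha> - 1)" using z s0 r a by (intro powr_mono2) auto
    then have "(r - s) * (\<alpha> * z powr (\<alpha> - 1)) \<le> (r - s) * (\<alpha> * R powr (\<alpha> - 1))"
      using sr a by (intro mult_left_mono) auto
    then show ?thesis using z by (simp add: algebra_simps)
  qed
qed

lemma abs_powr_diff_le: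
  fixes x y R \<alpha> :: real
  assumes a: "\<alpha> \<ge> 1" and "\<bar>x\<bar> \<le> R" "\<bar>y\<bar> \<le> R"
  shows "\<bar>\<bar>x\<bar> powr \<alpha> - \<bar>y\<bar> powr \<alpha>\<bar> \<le> \<alpha> * R powr (\<alpha> - 1) * \<bar>x - y\<bar>"
proof -
  have "\<alpha> * R powr (\<alpha> - 1) * \<bar>\<bar>x\<bar> - \<bar>y\<bar>\<bar> \<le> \<alpha> * R powr (\<alpha> - 1) * \<bar>x - y\<bar>"
    using a by (intro mult_left_mono abs_triangle_ineq3) auto
  moreover have "\<bar>\<bar>x\<bar> powr \<alpha> - \<bar>y\<bar> powr \<alpha>\<bar> \<le> \<alpha> * R powr (\<alpha> - 1) * \<bar>\<bar>x\<bar> - \<bar>y\<bar>\<bar>"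
  proof (cases "\<bar>y\<bar> \<le> \<bar>x\<bar>")
    case True
    then show ?thesis
      using powr_diff_le[of \<alpha> "\<bar>y\<bar>" "\<bar>x\<bar>" R] powr_mono2[of \<alpha> "\<bar>y\<bar>" "\<bar>x\<bar>"] assms by auto
  next
    case False
    then show ?thesis
      using powr_diff_le[of \<alpha> "\<bar>x\<bar>" "\<bar>y\<bar>" R] powr_mono2[of \<alpha> "\<bar>x\<bar>" "\<bar>y\<bar>"] assms by auto
  qed
  ultimately show ?thesis by linarith
qed

lemma powr_le_powr_bound_mult:
  fixes s R \<beta> :: real
  assumes "\<beta> \<ge> 1" "0 \<le> s" "s \<le> R"
  shows "s powr \<beta> \<le> R powr (\<beta> - 1) * s"
proof -
  have "s powr \<beta> = s powr (\<beta> - 1) * s"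
    using assms powr_add[of s "\<beta> - 1" 1] by simp
  also have "\<dots> \<le> R powr (\<beta> - 1) * s" using assms by (intro mult_right_mono powr_mono2) auto
  finally show ?thesis .
qed

lemma abs_powr_mult_abs_powr_diff_le:
  fixes a a' b b' R \<alpha> \<beta> :: real
  assumes ab: "\<alpha> \<ge> 1" "\<beta> \<ge> 1"
    and R: "\<bar>a\<bar> \<le> R" "\<bar>a'\<bar> \<le> R" "\<bar>b\<bar> \<le> R" "\<bar>b'\<bar> \<le> R"
  shows "\<bar>\<bar>a'\<bar> powr \<alpha> * \<bar>b'\<bar> powr \<beta> - \<bar>a\<bar> powr \<alpha> * \<bar>b\<bar> powr \<beta>\<bar>
    \<le> (\<alpha> + \<beta>) * (R powr (\<alpha> - 1) * R powr (\<beta> - 1)) * (\<bar>a' - a\<bar> + \<bar>b' - b\<bar>) * (\<bar>a\<bar> + \<bar>b'\<bar>)"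
proof -
  define P where "P = R powr (\<alpha> - 1) * R powr (\<beta> - 1)"
  have P0: "P \<ge> 0" unfolding P_def by simp
  have "\<bar>(\<bar>a'\<bar> powr \<alpha> - \<bar>a\<bar> powr \<alpha>) * \<bar>b'\<bar> powr \<beta>\<bar> \<le> (\<alpha> * R powr (\<alpha> - 1) * \<bar>a' - a\<bar>) * (R powr (\<beta> - 1) * \<bar>b'\<bar>)"
    unfolding abs_mult using abs_powr_diff_le[OF ab(1) R(2) R(1)] powr_le_powr_bound_mult[OF ab(2), of "\<bar>b'\<bar>" R] R ab
    by (intro mult_mono) auto
  moreover have "\<bar>\<bar>a\<bar> powr \<alpha> * (\<bar>b'\<bar> powr \<beta> - \<bar>b\<bar> powr \<beta>)\<bar> \<le> (R powr (\<alpha> - 1) * \<bar>a\<bar>) * (\<beta> * R powr (\<beta> - 1) * \<bar>b' - b\<bar>)"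
    unfolding abs_mult using abs_powr_diff_le[OF ab(2) R(4) R(3)] powr_le_powr_bound_mult[OF ab(1), of "\<bar>a\<bar>" R] R ab
    by (intro mult_mono) auto
  moreover have "(\<alpha> * R powr (\<alpha> - 1) * \<bar>a' - a\<bar>) * (R powr (\<beta> - 1) * \<bar>b'\<bar>) + (R powr (\<alpha> - 1) * \<bar>a\<bar>) * (\<beta> * R powr (\<beta> - 1) * \<bar>b' - b\<bar>)
     \<le> (\<alpha> + \<beta>) * P * (\<bar>a' - a\<bar> + \<bar>b' - b\<bar>) * (\<bar>a\<bar> + \<bar>b'\<bar>)"
  proof -
    have "0 \<le> \<beta> * P * \<bar>a' - a\<bar> * \<bar>b'\<bar> + \<alpha> * P * \<bar>a\<bar> * \<bar>b' - b\<bar> + (\<alpha> + \<beta>) * P * (\<bar>a' - a\<bar> * \<bar>a\<bar> + \<bar>b' - b\<bar> * \<bar>b'\<bar>)"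
      using ab P0 by (intro add_nonneg_nonneg mult_nonneg_nonneg) auto
    then show ?thesis unfolding P_def by (simp add: algebra_simps)
  qed
  moreover have "\<bar>a'\<bar> powr \<alpha> * \<bar>b'\<bar> powr \<beta> - \<bar>a\<bar> powr \<alpha> * \<bar>b\<bar> powr \<beta>
     = (\<bar>a'\<bar> powr \<alpha> - \<bar>a\<bar> powr \<alpha>) * \<bar>b'\<bar> powr \<beta> + \<bar>a\<bar> powr \<alpha> * (\<bar>b'\<bar> powr \<beta> - \<bar>b\<bar> powr \<beta>)"
    by (simp add: algebra_simps)
  ultimately show ?thesis
    unfolding P_def by (smt (verit) abs_triangle_ineq)
qed

lemma le_sqrt_mult_sqrt_of_scaled_bounds:
  fixes I A B :: real
  assumes A: "A \<ge> 0" and B: "B \<ge> 0" and h: "\<And>s. s > 0 \<Longrightarrow> 2 * I \<le> s * A + B / s"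
  shows "I \<le> sqrt A * sqrt B"
proof (cases "A > 0 \<and> B > 0")
  case True
  define s where "s = sqrt B / sqrt A"
  have "s > 0" "s * A = sqrt A * sqrt B" "B / s = sqrt A * sqrt B"
    using True unfolding s_def by (simp_all add: field_simps)
  then show ?thesis using h[of s] by simp
next
  case False
  have "I \<le> 0"
  proof (rule ccontr)
    assume "\<not> I \<le> 0"
    then have I0: "I > 0" by simp
    show False
    proof (cases "A = 0")
      case True
      have "2 * I \<le> B / (B / I + 1)" using h[of "B / I + 1"] True I0 B by (simp add: add_nonneg_pos)
      also have "\<dots> < I" using I0 B by (simp add: field_simps)
      finally show False using I0 by simp
    next
      case False
      then have "B = 0" using \<open>\<not> (A > 0 \<and> B > 0)\<close> A B by auto
      have "2 * I \<le> I / (A + 1) * A" using h[of "I / (A + 1)"] \<open>B = 0\<close> I0 A by simp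
      also have "\<dots> < 2 * I" using I0 A by (auto simp: field_simps intro!: add_nonneg_pos)
      finally show False by simp
    qed
  qed
  then show ?thesis using A B by (smt (verit) real_sqrt_ge_zero mult_nonneg_nonneg)
qed

lemma Cauchy_Schwarz_infsum:
  fixes m f g :: "'a \<Rightarrow> real"
  assumes m: "\<And>x. m x \<ge> 0" and f: "\<And>x. f x \<ge> 0" and g: "\<And>x. g x \<ge> 0"
    and sf: "(\<lambda>x. m x * (f x)\<^sup>2) summable_on A" and sg: "(\<lambda>x. m x * (g x)\<^sup>2) summable_on A"
  shows "(\<lambda>x. m x * (f x * g x)) summable_on A"
    and "infsum (\<lambda>x. m x * (f x * g x)) A
      \<le> sqrt (infsum (\<lambda>x. m x * (f x)\<^sup>2) A) * sqrt (infsum (\<lambda>x. m x * (g x)\<^sup>2) A)"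
proof -
  have pt: "2 * (m x * (f x * g x)) \<le> s * (m x * (f x)\<^sup>2) + (m x * (g x)\<^sup>2) / s" if s: "s > 0" for s x
  proof -
    have "2 * (s * f x) * g x \<le> (s * f x)\<^sup>2 + (g x)\<^sup>2" by (rule sum_squares_bound)
    then have "2 * (f x * g x) \<le> s * (f x)\<^sup>2 + (g x)\<^sup>2 / s" using s
      by (simp add: field_simps power2_eq_square)
    from mult_left_mono[OF this m] show ?thesis by (simp add: algebra_simps)
  qed
  have sfg: "(\<lambda>x. s * (m x * (f x)\<^sup>2) + (m x * (g x)\<^sup>2) / s) summable_on A" for s
    unfolding divide_inverse by (intro summable_on_add summable_on_cmult_right summable_on_cmult_left sf sg)
  show sm: "(\<lambda>x. m x * (f x * g x)) summable_on A"
  proof (rule summable_on_comparison_test[OF sfg[of 2]])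
    fix x
    have "0 \<le> m x * (f x * g x)" using m f g by simp
    then show "m x * (f x * g x) \<le> 2 * (m x * (f x)\<^sup>2) + m x * (g x)\<^sup>2 / 2"
      using pt[of 2 x] by linarith
  qed (use m f g in simp)
  show "infsum (\<lambda>x. m x * (f x * g x)) A
      \<le> sqrt (infsum (\<lambda>x. m x * (f x)\<^sup>2) A) * sqrt (infsum (\<lambda>x. m x * (g x)\<^sup>2) A)"
  proof (rule le_sqrt_mult_sqrt_of_scaled_bounds)
    show "0 \<le> infsum (\<lambda>x. m x * (f x)\<^sup>2) A" "0 \<le> infsum (\<lambda>x. m x * (g x)\<^sup>2) A"
      using m by (auto intro!: infsum_nonneg)
    fix s :: real assume s: "s > 0"
    have "2 * infsum (\<lambda>x. m x * (f x * g x)) A = infsum (\<lambda>x. 2 * (m x * (f x * g x))) A"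
      by (simp add: infsum_cmult_right')
    also have "\<dots> \<le> infsum (\<lambda>x. s * (m x * (f x)\<^sup>2) + (m x * (g x)\<^sup>2) / s) A"
      by (rule infsum_mono[OF summable_on_cmult_right[OF sm] sfg pt[OF s]])
    also have "\<dots> = s * infsum (\<lambda>x. m x * (f x)\<^sup>2) A + infsum (\<lambda>x. m x * (g x)\<^sup>2) A / s"
      unfolding divide_inverse
      by (subst infsum_add) (auto intro!: summable_on_cmult_right summable_on_cmult_left sf sg
          simp: infsum_cmult_right' infsum_cmult_left')
    finally show "2 * infsum (\<lambda>x. m x * (f x * g x)) A
        \<le> s * infsum (\<lambda>x. m x * (f x)\<^sup>2) A + infsum (\<lambda>x. m x * (g x)\<^sup>2) A / s" .
  qed
qed

lemma le_max_of_quadratic_le: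
  fixes c A B x :: real
  assumes "c > 0" "A \<ge> 0" "B \<ge> 0" "x \<ge> 0" "c * x\<^sup>2 \<le> A + B * x"
  shows "x \<le> max 1 ((A + B) / c)"
proof (cases "x \<le> 1")
  case False
  then have "c * x * x \<le> (A + B) * x"
    using assms mult_left_mono[of 1 x A] by (simp add: power2_eq_square algebra_simps)
  then have "c * x \<le> A + B" using False by (simp add: mult.commute[of _ x] mult.left_commute)
  then have "x \<le> (A + B) / c" using assms(1) by (simp add: field_simps)
  then show ?thesis by simp
qed simp

lemma sq_abs_add_le:
  fixes x y z :: real
  shows "(\<bar>x\<bar> + \<bar>y\<bar>)\<^sup>2 \<le> 2 * (x\<^sup>2 + y\<^sup>2)"
    and "(\<bar>x\<bar> + \<bar>y\<bar> + \<bar>z\<bar>)\<^sup>2 \<le> 3 * (x\<^sup>2 + y\<^sup>2 + z\<^sup>2)"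
  using zero_le_power2[of "\<bar>x\<bar> - \<bar>y\<bar>"] zero_le_power2[of "\<bar>x\<bar> - \<bar>z\<bar>"] zero_le_power2[of "\<bar>y\<bar> - \<bar>z\<bar>"]
  by (simp_all add: power2_eq_square algebra_simps)

lemma diagonal_convergent_subseq:
  fixes g :: "nat \<Rightarrow> nat \<Rightarrow> real"
  assumes bnd: "\<And>i k. \<bar>g i k\<bar> \<le> C i"
  shows "\<exists>r. strict_mono r \<and> (\<forall>i. convergent (\<lambda>k. g i (r k)))"
proof -
  interpret subseqs "\<lambda>i s. convergent (\<lambda>k. g i (s k))"
  proof
    fix i and s :: "nat \<Rightarrow> nat"
    obtain r where r: "strict_mono r" "monoseq (\<lambda>k. g i (s (r k)))" using seq_monosub[of "\<lambda>k. g i (s k)"] by blast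
    have "Bseq (\<lambda>k. g i (s (r k)))" using bnd by (intro BseqI'[of _ "C i"]) auto
    then have "convergent (\<lambda>k. g i (s (r k)))" using r(2) by (rule Bseq_monoseq_convergent)
    then show "\<exists>r'. strict_mono r' \<and> convergent (\<lambda>k. g i ((s \<circ> r') k))" using r(1) by auto
  qed
  have "convergent (\<lambda>k. g i (diagseq k))" for i
  proof -
    have "convergent (\<lambda>k. g i ((diagseq \<circ> (+) (Suc i)) k))"
    proof (rule diagseq_holds)
      fix r s :: "nat \<Rightarrow> nat" and n assume "strict_mono r" "convergent (\<lambda>k. g n (s k))"
      from convergent_subseq_convergent[of "\<lambda>k. g n (s k)" r, OF this(2,1)] show "convergent (\<lambda>k. g n ((s \<circ> r) k))"
        by (simp add: o_def)
    qed
    then have "convergent (\<lambda>k. g i (diagseq (k + Suc i)))" by (simp add: o_def add.commute)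
    then show ?thesis by (rule convergent_ignore_initial_segment[THEN iffD1])
  qed
  then show ?thesis using subseq_diagseq by blast
qed

lemma countable_diagonal_convergent_subseq:
  fixes g :: "'i \<Rightarrow> nat \<Rightarrow> real"
  assumes "countable (UNIV :: 'i set)" and "\<And>i k. \<bar>g i k\<bar> \<le> C i"
  shows "\<exists>r. strict_mono r \<and> (\<forall>i. convergent (\<lambda>k. g i (r k)))"
proof -
  let ?e = "from_nat_into (UNIV :: 'i set)"
  obtain r where r: "strict_mono r" "\<And>n. convergent (\<lambda>k. g (?e n) (r k))"
    using diagonal_convergent_subseq[of "\<lambda>n. g (?e n)" "\<lambda>n. C (?e n)"] assms(2) by blast
  have "convergent (\<lambda>k. g i (r k))" for i
  proof -
    obtain n where "?e n = i" using from_nat_into_surj[OF assms(1), of i] by blast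
    then show ?thesis using r(2)[of n] by simp
  qed
  then show ?thesis using r(1) by blast
qed

lemma walk_gdist:
  assumes "\<exists>n f. walk w n f x y" shows "\<exists>f. walk w (gdist w x y) f x y"
  unfolding gdist_def by (rule LeastI_ex) (use assms in blast)

lemma gdist_le: "walk w n f x y \<Longrightarrow> gdist w x y \<le> n"
  unfolding gdist_def by (auto intro: Least_le)

lemma finite_gdist_ball:
  assumes fin: "\<And>x. finite {y. adj w x y}" and conn: "\<And>x y. \<exists>n f. walk w n f x y"
  shows "finite {y. gdist w x0 y \<le> n}"
proof (induction n)
  case 0
  have "{y. gdist w x0 y \<le> 0} \<subseteq> {x0}"
  proof
    fix y assume "y \<in> {y. gdist w x0 y \<le> 0}"
    moreover obtain f where "walk w (gdist w x0 y) f x0 y" using walk_gdist[OF conn] by blast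
    ultimately show "y \<in> {x0}" unfolding walk_def by auto
  qed
  then show ?case by (rule finite_subset) simp
next
  case (Suc n)
  have "{y. gdist w x0 y \<le> Suc n} \<subseteq> {y. gdist w x0 y \<le> n} \<union> (\<Union>z\<in>{y. gdist w x0 y \<le> n}. {y. adj w z y})"
  proof
    fix y assume y: "y \<in> {y. gdist w x0 y \<le> Suc n}"
    obtain f where f: "walk w (gdist w x0 y) f x0 y" using walk_gdist[OF conn] by blast
    show "y \<in> {y. gdist w x0 y \<le> n} \<union> (\<Union>z\<in>{y. gdist w x0 y \<le> n}. {y. adj w z y})"
    proof (cases "gdist w x0 y")
      case (Suc k)
      have "walk w k f x0 (f k)" "adj w (f k) y" using f Suc unfolding walk_def by auto
      then show ?thesis using gdist_le[of w k f x0 "f k"] y Suc by auto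
    qed simp
  qed
  then show ?case by (rule finite_subset) (use Suc.IH fin in auto)
qed

lemma Gam_add_left:
  "Gam w mu (\<lambda>y. f y + g y) h x = Gam w mu f h x + Gam w mu g h x"
proof -
  have "(\<Sum>y\<in>{y. adj w x y}. w x y * (f y + g y - (f x + g x)) * (h y - h x))
     = (\<Sum>y\<in>{y. adj w x y}. w x y * (f y - f x) * (h y - h x))
       + (\<Sum>y\<in>{y. adj w x y}. w x y * (g y - g x) * (h y - h x))"
    by (simp add: sum.distrib[symmetric] algebra_simps)
  then show ?thesis unfolding Gam_def by (simp add: distrib_left)
qed

lemma Gam_scale_left: "Gam w mu (\<lambda>y. c * f y) h x = c * Gam w mu f h x"
  unfolding Gam_def by (simp add: sum_distrib_left algebra_simps)

lemma Gam_commute: "Gam w mu f g x = Gam w mu g f x"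
  unfolding Gam_def by (simp add: algebra_simps)

lemma Gam_self_nonneg:
  assumes "\<And>y. w x y \<ge> 0" "mu x > 0" shows "Gam w mu f f x \<ge> 0"
  unfolding Gam_def using assms by (auto intro!: divide_nonneg_nonneg sum_nonneg simp: mult.assoc)

section \<open>The energy space\<close>

lemma fst_padd [simp]: "fst (padd p q) = (\<lambda>x. fst p x + fst q x)"
  and snd_padd [simp]: "snd (padd p q) = (\<lambda>x. snd p x + snd q x)"
  and fst_pscale [simp]: "fst (pscale c p) = (\<lambda>x. c * fst p x)"
  and snd_pscale [simp]: "snd (pscale c p) = (\<lambda>x. c * snd p x)"
  and fst_psub [simp]: "fst (psub p q) = (\<lambda>x. fst p x - fst q x)"
  and snd_psub [simp]: "snd (psub p q) = (\<lambda>x. snd p x - snd q x)"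
  by (simp_all add: padd_def pscale_def psub_def)

lemma psub_eq_padd_pscale: "psub p q = padd p (pscale (-1) q)"
  by (simp add: psub_def padd_def pscale_def)

definition pointwise_LIMSEQ :: "(nat \<Rightarrow> 'v pairfun) \<Rightarrow> 'v pairfun \<Rightarrow> bool" where
  "pointwise_LIMSEQ P q \<longleftrightarrow> (\<forall>x. (\<lambda>k. fst (P k) x) \<longlonglongrightarrow> fst q x \<and> (\<lambda>k. snd (P k) x) \<longlonglongrightarrow> snd q x)"

locale graph_energy =
  fixes w :: "'v \<Rightarrow> 'v \<Rightarrow> real" and mu a b :: "'v \<Rightarrow> real" and lam mu_min :: real
  assumes weights_nonneg: "\<And>x y. w x y \<ge> 0"
    and mu_min_pos: "mu_min > 0" and mu_ge: "\<And>x. mu x \<ge> mu_min"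
    and lam_pos: "lam > 0" and a_nonneg: "\<And>x. a x \<ge> 0" and b_nonneg: "\<And>x. b x \<ge> 0"
begin

abbreviation Hspace :: "'v pairfun set" where "Hspace \<equiv> H_lam w mu a b lam"
abbreviation Hnorm :: "'v pairfun \<Rightarrow> real" where "Hnorm \<equiv> H_norm w mu a b lam"

text \<open>\<open>pairing\<close> is the inner product of \<open>H\<^sub>\<lambda>\<close>, so \<open>energy p = \<parallel>p\<parallel>\<^sup>2\<close>.\<close>

definition pairing_density :: "'v pairfun \<Rightarrow> 'v pairfun \<Rightarrow> 'v \<Rightarrow> real" where
  "pairing_density p q x = Gam w mu (fst p) (fst q) x + Gam w mu (snd p) (snd q) x
      + (lam * a x + 1) * (fst p x * fst q x) + (lam * b x + 1) * (snd p x * snd q x)"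

definition pairing :: "'v pairfun \<Rightarrow> 'v pairfun \<Rightarrow> real" where
  "pairing p q = infsum (\<lambda>x. mu x * pairing_density p q x) UNIV"

abbreviation energy_density :: "'v pairfun \<Rightarrow> 'v \<Rightarrow> real" where
  "energy_density p \<equiv> pairing_density p p"

abbreviation energy :: "'v pairfun \<Rightarrow> real" where
  "energy p \<equiv> pairing p p"

definition finite_energy :: "'v pairfun \<Rightarrow> bool" where
  "finite_energy p \<longleftrightarrow> (\<lambda>x. mu x * energy_density p x) summable_on UNIV"

definition l2sq :: "'v pairfun \<Rightarrow> real" where
  "l2sq p = infsum (\<lambda>x. mu x * ((fst p x)\<^sup>2 + (snd p x)\<^sup>2)) UNIV"

lemma mu_pos: "mu x > 0"
  using mu_min_pos mu_ge by (meson less_le_trans)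

lemma Gam_self_nonneg': "Gam w mu f f x \<ge> 0"
  using Gam_self_nonneg[where w=w and mu=mu and x=x] weights_nonneg mu_pos by blast

lemma pairing_density_commute: "pairing_density p q x = pairing_density q p x"
  unfolding pairing_density_def by (simp add: Gam_commute[of w mu "fst p"] Gam_commute[of w mu "snd p"] mult.commute)

lemma pairing_density_padd_left:
  "pairing_density (padd p q) r x = pairing_density p r x + pairing_density q r x"
  unfolding pairing_density_def by (simp add: Gam_add_left algebra_simps)

lemma pairing_density_pscale_left:
  "pairing_density (pscale c p) r x = c * pairing_density p r x"
  unfolding pairing_density_def by (simp add: Gam_scale_left algebra_simps)

lemma pairing_density_padd_right:
  "pairing_density r (padd p q) x = pairing_density r p x + pairing_density r q x"
  and pairing_density_pscale_right:
  "pairing_density r (pscale c p) x = c * pairing_density r p x"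
  by (simp_all only: pairing_density_commute[of r] pairing_density_padd_left pairing_density_pscale_left)

lemma energy_density_padd_pscale:
  "energy_density (padd p (pscale t h)) x
    = energy_density p x + 2 * t * pairing_density p h x + t\<^sup>2 * energy_density h x"
  by (simp add: pairing_density_padd_left pairing_density_padd_right pairing_density_pscale_left
      pairing_density_pscale_right pairing_density_commute[of h p] power2_eq_square algebra_simps)

lemma energy_density_pscale: "energy_density (pscale c p) x = c\<^sup>2 * energy_density p x"
  by (simp add: pairing_density_pscale_left pairing_density_pscale_right power2_eq_square)

lemma energy_density_nonneg: "energy_density p x \<ge> 0"
  unfolding pairing_density_def
  using Gam_self_nonneg'[of "fst p" x] Gam_self_nonneg'[of "snd p" x]
    lam_pos a_nonneg[of x] b_nonneg[of x]
  by (intro add_nonneg_nonneg) (auto simp: power2_eq_square[symmetric])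

lemma sq_le_energy_density: "(fst p x)\<^sup>2 + (snd p x)\<^sup>2 \<le> energy_density p x"
  and potential_le_energy_density: "lam * a x * (fst p x)\<^sup>2 + lam * b x * (snd p x)\<^sup>2 \<le> energy_density p x"
  unfolding pairing_density_def
  using Gam_self_nonneg'[of "fst p" x] Gam_self_nonneg'[of "snd p" x]
    lam_pos a_nonneg[of x] b_nonneg[of x]
  by (auto simp: power2_eq_square algebra_simps)

text \<open>Cauchy--Schwarz for the pairing, from nonnegativity of the energy of \<open>p \<plusminus> q\<close>.\<close>

lemma pairing_density_abs_le: "2 * \<bar>pairing_density p q x\<bar> \<le> energy_density p x + energy_density q x"
  using energy_density_padd_pscale[of p 1 q x] energy_density_padd_pscale[of p "-1" q x]
    energy_density_nonneg[of "padd p (pscale 1 q)" x] energy_density_nonneg[of "padd p (pscale (-1) q)" x]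
  by (simp add: abs_le_iff)

lemma energy_density_padd_le:
  "energy_density (padd p q) x \<le> 2 * energy_density p x + 2 * energy_density q x"
  using energy_density_padd_pscale[of p 1 q x] pairing_density_abs_le[of p q x]
    energy_density_nonneg[of p x] energy_density_nonneg[of q x]
  by (simp add: pscale_def)

lemma mu_energy_density_nonneg: "mu x * energy_density p x \<ge> 0"
  using mu_pos[of x] energy_density_nonneg[of p x] by simp

lemma energy_nonneg: "energy p \<ge> 0"
  unfolding pairing_def by (rule infsum_nonneg) (rule mu_energy_density_nonneg)

lemma summable_le_energy_density:
  assumes "finite_energy p" "\<And>x. 0 \<le> f x" "\<And>x. f x \<le> energy_density p x"
  shows "(\<lambda>x. mu x * f x) summable_on UNIV"
  using assms(1) unfolding finite_energy_def
proof (rule summable_on_comparison_test)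
  fix x
  show "mu x * f x \<le> mu x * energy_density p x" "0 \<le> mu x * f x"
    using assms(2,3)[of x] mu_pos[of x] by (auto intro: mult_left_mono)
qed

lemma infsum_le_energy:
  assumes "finite_energy p" "\<And>x. 0 \<le> f x" "\<And>x. f x \<le> energy_density p x"
  shows "infsum (\<lambda>x. mu x * f x) UNIV \<le> energy p"
  unfolding pairing_def
  by (rule infsum_mono[OF summable_le_energy_density[OF assms]])
    (use assms mu_pos in \<open>auto intro: mult_left_mono simp: finite_energy_def\<close>)

lemma finite_energy_pscale: "finite_energy p \<Longrightarrow> finite_energy (pscale c p)"
  unfolding finite_energy_def energy_density_pscale
  by (simp add: summable_on_cmult_right mult.left_commute[of "mu _"])

lemma finite_energy_padd:
  assumes "finite_energy p" "finite_energy q" shows "finite_energy (padd p q)"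
proof -
  have "(\<lambda>x. 2 * (mu x * energy_density p x) + 2 * (mu x * energy_density q x)) summable_on UNIV"
    using assms unfolding finite_energy_def by (intro summable_on_add summable_on_cmult_right)
  then show ?thesis unfolding finite_energy_def
  proof (rule summable_on_comparison_test)
    fix x
    show "mu x * energy_density (padd p q) x \<le> 2 * (mu x * energy_density p x) + 2 * (mu x * energy_density q x)"
      using mult_left_mono[OF energy_density_padd_le[of p q x] less_imp_le[OF mu_pos[of x]]]
      by (simp add: algebra_simps)
  qed (rule mu_energy_density_nonneg)
qed

lemma finite_energy_psub: "finite_energy p \<Longrightarrow> finite_energy q \<Longrightarrow> finite_energy (psub p q)"
  unfolding psub_eq_padd_pscale by (intro finite_energy_padd finite_energy_pscale)

lemma summable_pairing_density:
  assumes "finite_energy p" "finite_energy q"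
  shows "(\<lambda>x. mu x * pairing_density p q x) summable_on UNIV"
proof -
  have "(\<lambda>x. (mu x * energy_density p x + mu x * energy_density q x) / 2) summable_on UNIV"
    using assms unfolding finite_energy_def divide_inverse by (intro summable_on_cmult_left summable_on_add)
  note g = summable_on_iff_abs_summable_on_real[THEN iffD1, OF this]
  have "norm (mu x * pairing_density p q x)
      \<le> norm ((mu x * energy_density p x + mu x * energy_density q x) / 2)" for x
  proof -
    have "mu x * (2 * \<bar>pairing_density p q x\<bar>) \<le> mu x * (energy_density p x + energy_density q x)"
      using mu_pos[of x] pairing_density_abs_le[of p q x] by (intro mult_left_mono) auto
    then show ?thesis
      using mu_pos[of x] mu_energy_density_nonneg[of x p] mu_energy_density_nonneg[of x q]
      by (simp add: abs_mult algebra_simps)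
  qed
  from Infinite_Sum.abs_summable_on_comparison_test[OF g this]
  show ?thesis by (rule summable_on_iff_abs_summable_on_real[THEN iffD2])
qed

lemma energy_pscale: "energy (pscale c p) = c\<^sup>2 * energy p"
  unfolding pairing_def energy_density_pscale by (simp add: mult.left_commute[of "mu _"] infsum_cmult_right')

lemma energy_padd_pscale:
  assumes "finite_energy p" "finite_energy h"
  shows "energy (padd p (pscale t h)) = energy p + 2 * t * pairing p h + t\<^sup>2 * energy h"
proof -
  note sp = assms(1)[unfolded finite_energy_def] and sh = assms(2)[unfolded finite_energy_def]
  note sph = summable_pairing_density[OF assms]
  have "energy (padd p (pscale t h)) = infsum (\<lambda>x. mu x * energy_density p x
      + (2 * t) * (mu x * pairing_density p h x) + t\<^sup>2 * (mu x * energy_density h x)) UNIV"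
    unfolding pairing_def energy_density_padd_pscale by (simp add: algebra_simps)
  also have "\<dots> = energy p + (2 * t) * pairing p h + t\<^sup>2 * energy h"
    unfolding pairing_def
    by (simp add: infsum_add summable_on_add summable_on_cmult_right sp sh sph infsum_cmult_right')
  finally show ?thesis .
qed

lemma energy_padd_le:
  assumes "finite_energy p" "finite_energy q"
  shows "energy (padd p q) \<le> 2 * energy p + 2 * energy q"
proof -
  note sp = assms(1)[unfolded finite_energy_def] and sq = assms(2)[unfolded finite_energy_def]
  have "energy (padd p q) \<le> infsum (\<lambda>x. 2 * (mu x * energy_density p x) + 2 * (mu x * energy_density q x)) UNIV"
    unfolding pairing_def
  proof (rule infsum_mono)
    fix x
    show "mu x * energy_density (padd p q) x \<le> 2 * (mu x * energy_density p x) + 2 * (mu x * energy_density q x)"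
      using mult_left_mono[OF energy_density_padd_le[of p q x] less_imp_le[OF mu_pos[of x]]]
      by (simp add: algebra_simps)
  qed (use finite_energy_padd[OF assms] sp sq in \<open>auto simp: finite_energy_def intro: summable_on_add summable_on_cmult_right\<close>)
  also have "\<dots> = 2 * energy p + 2 * energy q"
    unfolding pairing_def by (simp add: infsum_add summable_on_cmult_right sp sq infsum_cmult_right')
  finally show ?thesis .
qed

lemma energy_psub_eq:
  assumes "finite_energy p" "finite_energy q"
  shows "energy (psub p q) = energy q - energy p - 2 * pairing p (psub q p)"
proof -
  have sq: "(\<lambda>x. mu x * pairing_density p q x) summable_on UNIV"
    and sp: "(\<lambda>x. - (mu x * pairing_density p p x)) summable_on UNIV"
    using summable_pairing_density[OF assms(1)] summable_on_uminus[THEN iffD2, OF summable_pairing_density[OF assms(1,1)]]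
      assms(2) by blast+
  have "pairing p (psub q p) = infsum (\<lambda>x. mu x * pairing_density p q x + - (mu x * pairing_density p p x)) UNIV"
    unfolding pairing_def psub_eq_padd_pscale pairing_density_padd_right pairing_density_pscale_right
    by (simp add: algebra_simps)
  also have "\<dots> = pairing p q - energy p"
    unfolding infsum_add[OF sq sp] infsum_uminus pairing_def by simp
  finally show ?thesis
    using energy_padd_pscale[OF assms, of "-1"] unfolding psub_eq_padd_pscale by simp
qed

lemma mu_energy_density_le_energy:
  assumes "finite_energy p" shows "mu x * energy_density p x \<le> energy p"
proof -
  have "sum (\<lambda>x. mu x * energy_density p x) {x} \<le> energy p"
    unfolding pairing_def using assms unfolding finite_energy_def
    by (intro finite_sum_le_infsum) (auto intro: mu_energy_density_nonneg)
  then show ?thesis by simp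
qed

lemma sq_le_energy:
  assumes "finite_energy p" shows "(fst p x)\<^sup>2 + (snd p x)\<^sup>2 \<le> energy p / mu_min"
proof -
  have "mu_min * ((fst p x)\<^sup>2 + (snd p x)\<^sup>2) \<le> mu x * energy_density p x"
    using mu_ge sq_le_energy_density[of p x] mu_min_pos mu_pos[of x] by (intro mult_mono) auto
  also have "\<dots> \<le> energy p" by (rule mu_energy_density_le_energy[OF assms])
  finally show ?thesis using mu_min_pos by (simp add: field_simps)
qed

lemma abs_le_sqrt_energy:
  assumes "finite_energy p"
  shows "\<bar>fst p x\<bar> \<le> sqrt (energy p / mu_min)" and "\<bar>snd p x\<bar> \<le> sqrt (energy p / mu_min)"
proof -
  have "(fst p x)\<^sup>2 \<le> energy p / mu_min" "(snd p x)\<^sup>2 \<le> energy p / mu_min"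
    using sq_le_energy[OF assms, of x] zero_le_power2[of "fst p x"] zero_le_power2[of "snd p x"] by linarith+
  then show "\<bar>fst p x\<bar> \<le> sqrt (energy p / mu_min)" "\<bar>snd p x\<bar> \<le> sqrt (energy p / mu_min)"
    by (metis real_sqrt_abs real_sqrt_le_mono)+
qed

lemma summable_l2sq:
  "finite_energy p \<Longrightarrow> (\<lambda>x. mu x * ((fst p x)\<^sup>2 + (snd p x)\<^sup>2)) summable_on UNIV"
  by (rule summable_le_energy_density) (auto intro: sq_le_energy_density)

lemma l2sq_le_energy: "finite_energy p \<Longrightarrow> l2sq p \<le> energy p"
  unfolding l2sq_def by (rule infsum_le_energy) (auto intro: sq_le_energy_density)

lemma l2sq_nonneg: "l2sq p \<ge> 0"
  unfolding l2sq_def by (intro infsum_nonneg mult_nonneg_nonneg) (auto simp: less_imp_le mu_pos)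

lemma H_lam_iff_finite_energy: "p \<in> Hspace \<longleftrightarrow> finite_energy p"
proof
  assume "p \<in> Hspace"
  then have "(\<lambda>x. mu x * (grad2 w mu (fst p) x + (fst p x)\<^sup>2) + mu x * (grad2 w mu (snd p) x + (snd p x)\<^sup>2)
     + mu x * (lam * a x * (fst p x)\<^sup>2 + lam * b x * (snd p x)\<^sup>2)) summable_on UNIV"
    unfolding H_lam_def W12_def integrable_V_def by (auto simp: case_prod_beta intro!: summable_on_add)
  then show "finite_energy p"
    unfolding finite_energy_def pairing_density_def grad2_def by (simp add: power2_eq_square algebra_simps)
next
  assume p: "finite_energy p"
  have gp: "0 \<le> lam * a x * (fst p x)\<^sup>2 + lam * b x * (snd p x)\<^sup>2" for x
    using lam_pos a_nonneg[of x] b_nonneg[of x] by simp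
  have "0 \<le> grad2 w mu f x" for f x unfolding grad2_def by (rule Gam_self_nonneg')
  moreover have "grad2 w mu (fst p) x + (fst p x)\<^sup>2 \<le> energy_density p x"
    and "grad2 w mu (snd p) x + (snd p x)\<^sup>2 \<le> energy_density p x" for x
    using gp[of x] Gam_self_nonneg'[of "fst p" x] Gam_self_nonneg'[of "snd p" x]
    unfolding pairing_density_def grad2_def by (auto simp: power2_eq_square algebra_simps)
  ultimately show "p \<in> Hspace"
    unfolding H_lam_def W12_def integrable_V_def
    using summable_le_energy_density[OF p] potential_le_energy_density gp
    by (auto simp: case_prod_beta)
qed

lemma H_norm_eq_sqrt_energy: "Hnorm p = sqrt (energy p)"
  unfolding H_norm_def integral_V_def pairing_def pairing_density_def grad2_def
  by (simp add: power2_eq_square)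

lemma H_norm_nonneg: "Hnorm p \<ge> 0"
  unfolding H_norm_eq_sqrt_energy using energy_nonneg by simp

lemma H_norm_pscale: "Hnorm (pscale c p) = \<bar>c\<bar> * Hnorm p"
  unfolding H_norm_eq_sqrt_energy energy_pscale by (simp add: real_sqrt_mult)

lemma frechet_deriv_H_directional:
  assumes fr: "frechet_deriv_H Hspace Hnorm F p D" and h: "finite_energy h"
  shows "((\<lambda>t. (F (padd p (pscale t h)) - F p) / t) \<longlongrightarrow> D h) (at 0)"
proof (rule tendstoI)
  fix \<epsilon> :: real assume \<epsilon>: "\<epsilon> > 0"
  define N where "N = Hnorm h + 1"
  have N: "N > 0" "Hnorm h \<le> N" using H_norm_nonneg[of h] unfolding N_def by auto
  have hH: "h \<in> Hspace" and thH: "pscale t h \<in> Hspace" for t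
    using h finite_energy_pscale[OF h] H_lam_iff_finite_energy by blast+
  have lin: "D (pscale t h) = t * D h" for t using fr hH unfolding frechet_deriv_H_def by blast
  have "\<epsilon> / (2 * N) > 0" using \<epsilon> N(1) by simp
  then obtain \<delta> where \<delta>: "\<delta> > 0"
    and approx: "\<forall>k\<in>Hspace. Hnorm k < \<delta> \<longrightarrow> \<bar>F (padd p k) - F p - D k\<bar> \<le> \<epsilon> / (2 * N) * Hnorm k"
    using fr unfolding frechet_deriv_H_def by blast
  show "\<forall>\<^sub>F t in at 0. dist ((F (padd p (pscale t h)) - F p) / t) (D h) < \<epsilon>"
    unfolding eventually_at
  proof (intro exI[of _ "\<delta> / N"] conjI ballI impI)
    fix t :: real assume "t \<noteq> 0 \<and> dist t 0 < \<delta> / N"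
    then have t: "t \<noteq> 0" "\<bar>t\<bar> * N < \<delta>" using N(1) by (auto simp: dist_real_def field_simps)
    have "Hnorm (pscale t h) < \<delta>"
      using mult_left_mono[OF N(2), of "\<bar>t\<bar>"] t(2) unfolding H_norm_pscale by simp
    then have "\<bar>F (padd p (pscale t h)) - F p - D (pscale t h)\<bar> \<le> \<epsilon> / (2 * N) * Hnorm (pscale t h)"
      using approx thH by blast
    then have "\<bar>F (padd p (pscale t h)) - F p - t * D h\<bar> \<le> \<epsilon> / (2 * N) * (\<bar>t\<bar> * Hnorm h)"
      unfolding lin H_norm_pscale .
    moreover have "(F (padd p (pscale t h)) - F p) / t - D h = (F (padd p (pscale t h)) - F p - t * D h) / t"
      using t(1) by (simp add: field_simps)
    ultimately have "\<bar>(F (padd p (pscale t h)) - F p) / t - D h\<bar> \<le> \<epsilon> / (2 * N) * Hnorm h"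
      using t(1) by (simp add: abs_divide divide_le_eq mult.commute mult.left_commute)
    also have "\<dots> \<le> \<epsilon> / 2" using N \<epsilon> by (simp add: field_simps)
    finally show "dist ((F (padd p (pscale t h)) - F p) / t) (D h) < \<epsilon>"
      using \<epsilon> by (simp add: dist_real_def)
  qed (use \<delta> N(1) in simp)
qed

lemma frechet_deriv_H_abs_le_dual_norm:
  assumes fr: "frechet_deriv_H Hspace Hnorm F p D" and h: "finite_energy h"
  shows "\<bar>D h\<bar> \<le> dual_norm Hspace Hnorm D * Hnorm h"
proof -
  obtain C where C: "\<And>k. k \<in> Hspace \<Longrightarrow> \<bar>D k\<bar> \<le> C * Hnorm k"
    using fr unfolding frechet_deriv_H_def by blast
  have lin: "D (pscale c k) = c * D k" if "k \<in> Hspace" for c k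
    using fr that unfolding frechet_deriv_H_def by blast
  have hH: "h \<in> Hspace" using h H_lam_iff_finite_energy by blast
  show ?thesis
  proof (cases "Hnorm h = 0")
    case True
    then show ?thesis using C[OF hH] by simp
  next
    case False
    then have n0: "Hnorm h > 0" using H_norm_nonneg[of h] by simp
    let ?k = "pscale (1 / Hnorm h) h"
    have kH: "?k \<in> Hspace" using finite_energy_pscale[OF h] H_lam_iff_finite_energy by blast
    have "bdd_above ((\<lambda>k. \<bar>D k\<bar>) ` {k \<in> Hspace. Hnorm k \<le> 1})"
    proof (rule bdd_aboveI2)
      fix k assume k: "k \<in> {k \<in> Hspace. Hnorm k \<le> 1}"
      then have "\<bar>D k\<bar> \<le> C * Hnorm k" using C by blast
      also have "\<dots> \<le> max C 0" using k H_norm_nonneg[of k]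
        by (cases "C \<ge> 0") (auto intro: mult_left_le mult_nonpos_nonneg order.trans)
      finally show "\<bar>D k\<bar> \<le> max C 0" .
    qed
    moreover have "Hnorm ?k = 1" unfolding H_norm_pscale using n0 by simp
    ultimately have "\<bar>D ?k\<bar> \<le> dual_norm Hspace Hnorm D"
      unfolding dual_norm_def using kH by (intro cSUP_upper) auto
    moreover have "D ?k = D h / Hnorm h" using lin[OF hH] by simp
    ultimately show ?thesis using n0 by (simp add: abs_divide divide_le_eq)
  qed
qed

lemma energy_density_tendsto:
  "pointwise_LIMSEQ P q \<Longrightarrow> (\<lambda>k. energy_density (P k) x) \<longlonglongrightarrow> energy_density q x"
  unfolding pointwise_LIMSEQ_def pairing_density_def Gam_def by (intro tendsto_intros) auto

lemma finite_sum_energy_density_le_energy: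
  "finite_energy p \<Longrightarrow> finite F \<Longrightarrow> sum (\<lambda>x. mu x * energy_density p x) F \<le> energy p"
  unfolding pairing_def finite_energy_def by (intro finite_sum_le_infsum) (auto intro: mu_energy_density_nonneg)

lemma finite_energy_pointwise_limit:
  assumes P: "\<And>k. finite_energy (P k)" "\<And>k. energy (P k) \<le> E" and lim: "pointwise_LIMSEQ P q"
  shows "finite_energy q" and "energy q \<le> E"
proof -
  have sums: "sum (\<lambda>x. mu x * energy_density q x) F \<le> E" if F: "finite F" for F
  proof (rule tendsto_upperbound)
    show "(\<lambda>k. sum (\<lambda>x. mu x * energy_density (P k) x) F) \<longlonglongrightarrow> sum (\<lambda>x. mu x * energy_density q x) F"
      by (intro tendsto_intros energy_density_tendsto lim)
    show "\<forall>\<^sub>F k in sequentially. sum (\<lambda>x. mu x * energy_density (P k) x) F \<le> E"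
      using order_trans[OF finite_sum_energy_density_le_energy[OF P(1) F] P(2)] by simp
  qed simp
  show q: "finite_energy q" unfolding finite_energy_def
    by (rule nonneg_bdd_above_summable_on) (auto intro: mu_energy_density_nonneg sums bdd_aboveI2)
  show "energy q \<le> E"
    using q unfolding pairing_def finite_energy_def by (rule infsum_le_finite_sums) (rule sums)
qed

lemma energy_lower_semicontinuous:
  assumes P: "\<And>k. finite_energy (P k)" and q: "finite_energy q" and lim: "pointwise_LIMSEQ P q"
    and \<epsilon>: "\<epsilon> > 0"
  shows "eventually (\<lambda>k. energy q - \<epsilon> < energy (P k)) sequentially"
proof -
  obtain F where F: "finite F" "dist (sum (\<lambda>x. mu x * energy_density q x) F) (energy q) \<le> \<epsilon> / 2"
    using infsum_finite_approximation[of "\<lambda>x. mu x * energy_density q x" UNIV "\<epsilon> / 2"] q \<epsilon>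
    unfolding finite_energy_def pairing_def by auto
  have "(\<lambda>k. sum (\<lambda>x. mu x * energy_density (P k) x) F) \<longlonglongrightarrow> sum (\<lambda>x. mu x * energy_density q x) F"
    by (intro tendsto_intros energy_density_tendsto lim)
  from order_tendstoD(1)[OF this, of "sum (\<lambda>x. mu x * energy_density q x) F - \<epsilon> / 2"] \<epsilon>
  have "eventually (\<lambda>k. sum (\<lambda>x. mu x * energy_density q x) F - \<epsilon> / 2
      < sum (\<lambda>x. mu x * energy_density (P k) x) F) sequentially" by simp
  then show ?thesis
  proof (rule eventually_mono)
    fix k assume "sum (\<lambda>x. mu x * energy_density q x) F - \<epsilon> / 2 < sum (\<lambda>x. mu x * energy_density (P k) x) F"
    moreover have "sum (\<lambda>x. mu x * energy_density (P k) x) F \<le> energy (P k)"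
      by (rule finite_sum_energy_density_le_energy[OF P F(1)])
    moreover have "energy q - \<epsilon> / 2 \<le> sum (\<lambda>x. mu x * energy_density q x) F"
      using F(2) unfolding dist_real_def by arith
    ultimately show "energy q - \<epsilon> < energy (P k)" by linarith
  qed
qed

lemma energy_bounded_pointwise_convergent_subseq:
  fixes p :: "nat \<Rightarrow> 'v pairfun"
  assumes "countable (UNIV :: 'v set)" and P: "\<And>k. finite_energy (p k)" "\<And>k. energy (p k) \<le> E"
  shows "\<exists>r q. strict_mono r \<and> finite_energy q \<and> energy q \<le> E \<and> pointwise_LIMSEQ (p \<circ> r) q"
proof -
  define g where "g i (k::nat) = (if snd i then fst (p k) (fst i) else snd (p k) (fst i))" for i :: "'v \<times> bool" and k
  have bound: "\<bar>g i k\<bar> \<le> sqrt (E / mu_min)" for i k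
  proof -
    have s: "sqrt (energy (p k) / mu_min) \<le> sqrt (E / mu_min)"
      using P(2)[of k] mu_min_pos by (intro real_sqrt_le_mono divide_right_mono) auto
    show ?thesis
      using order_trans[OF abs_le_sqrt_energy(1)[OF P(1)] s] order_trans[OF abs_le_sqrt_energy(2)[OF P(1)] s]
      unfolding g_def by simp
  qed
  have "countable (UNIV :: ('v \<times> bool) set)"
    using countable_SIGMA[of "UNIV :: 'v set" "\<lambda>_. UNIV :: bool set"] assms(1) by simp
  then obtain r where r: "strict_mono r" "\<And>i. convergent (\<lambda>k. g i (r k))"
    using countable_diagonal_convergent_subseq[where g=g, OF _ bound] by blast
  define q where "q = ((\<lambda>x. lim (\<lambda>k. g (x, True) (r k))), (\<lambda>x. lim (\<lambda>k. g (x, False) (r k))))"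
  have lim: "pointwise_LIMSEQ (p \<circ> r) q"
    unfolding pointwise_LIMSEQ_def q_def
    using r(2)[of "(_, True)"] r(2)[of "(_, False)"] by (simp add: g_def convergent_LIMSEQ_iff)
  have "finite_energy q" "energy q \<le> E"
    using finite_energy_pointwise_limit[of "p \<circ> r" E q] P lim by auto
  then show ?thesis using r(1) lim by blast
qed

lemma sq_diff_le_energy_density_where_large:
  assumes M: "M > 0" "M \<le> a x" "M \<le> b x"
  shows "(fst q x - fst p x)\<^sup>2 + (snd q x - snd p x)\<^sup>2
    \<le> 2 / (lam * M) * (energy_density q x + energy_density p x)"
proof -
  have large: "lam * M * ((fst r x)\<^sup>2 + (snd r x)\<^sup>2) \<le> energy_density r x" for r
  proof -
    have "lam * M * (fst r x)\<^sup>2 \<le> lam * a x * (fst r x)\<^sup>2" "lam * M * (snd r x)\<^sup>2 \<le> lam * b x * (snd r x)\<^sup>2"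
      using M lam_pos by (auto intro!: mult_right_mono)
    then show ?thesis using potential_le_energy_density[of x r] by (simp add: algebra_simps)
  qed
  have "(fst q x - fst p x)\<^sup>2 + (snd q x - snd p x)\<^sup>2
      \<le> 2 * (((fst q x)\<^sup>2 + (snd q x)\<^sup>2) + ((fst p x)\<^sup>2 + (snd p x)\<^sup>2))"
  proof -
    have sq: "(s - t)\<^sup>2 \<le> 2 * s\<^sup>2 + 2 * t\<^sup>2" for s t :: real
      using zero_le_power2[of "s + t"] unfolding power2_diff power2_sum by linarith
    show ?thesis using sq[of "fst q x" "fst p x"] sq[of "snd q x" "snd p x"] by (simp add: algebra_simps)
  qed
  also have "\<dots> \<le> 2 / (lam * M) * (energy_density q x + energy_density p x)"
    using large[of q] large[of p] M lam_pos by (simp add: field_simps)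
  finally show ?thesis .
qed

lemma l2sq_psub_le_finite_part:
  assumes p: "finite_energy p" "energy p \<le> E" and q: "finite_energy q" "energy q \<le> E"
    and F: "finite F" and M: "M > 0" and large: "\<And>x. x \<notin> F \<Longrightarrow> M \<le> a x \<and> M \<le> b x"
  shows "l2sq (psub q p) \<le> (\<Sum>x\<in>F. mu x * ((fst q x - fst p x)\<^sup>2 + (snd q x - snd p x)\<^sup>2)) + 4 * E / (lam * M)"
proof -
  define f where "f x = mu x * ((fst q x - fst p x)\<^sup>2 + (snd q x - snd p x)\<^sup>2)" for x
  define g where "g x = 2 / (lam * M) * (mu x * energy_density q x + mu x * energy_density p x)" for x
  have sf: "f summable_on UNIV" using summable_l2sq[OF finite_energy_psub[OF q(1) p(1)]] unfolding f_def by simp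
  have sg: "g summable_on UNIV" unfolding g_def
    using p q unfolding finite_energy_def by (intro summable_on_cmult_right summable_on_add)
  have g0: "g x \<ge> 0" for x unfolding g_def using lam_pos M mu_energy_density_nonneg[of x] by simp
  have fg: "f x \<le> g x" if "x \<notin> F" for x
    using mult_left_mono[OF sq_diff_le_energy_density_where_large[of M x q p] less_imp_le[OF mu_pos[of x]]]
      large[OF that] M unfolding f_def g_def by (simp add: algebra_simps)
  have "l2sq (psub q p) = infsum f UNIV" unfolding l2sq_def f_def by simp
  also have "\<dots> = infsum f F + infsum f (-F)"
    by (subst infsum_Un_disjoint[symmetric]) (auto intro: summable_on_subset[OF sf])
  also have "infsum f (-F) \<le> infsum g (-F)"
    by (rule infsum_mono) (auto intro: summable_on_subset[OF sf] summable_on_subset[OF sg] fg)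
  also have "\<dots> \<le> infsum g UNIV"
    by (rule infsum_mono_neutral) (auto intro: summable_on_subset[OF sg] sg g0)
  also have "infsum g UNIV = 2 / (lam * M) * (energy q + energy p)"
    unfolding g_def pairing_def infsum_cmult_right'
    using p(1) q(1) unfolding finite_energy_def by (simp add: infsum_add)
  also have "\<dots> \<le> 2 / (lam * M) * (2 * E)"
    using p(2) q(2) lam_pos M by (intro mult_left_mono) auto
  finally show ?thesis using F unfolding f_def by (simp add: field_simps)
qed

lemma l2sq_psub_tendsto_zero:
  assumes P: "\<And>k. finite_energy (P k)" "\<And>k. energy (P k) \<le> E"
    and q: "finite_energy q" "energy q \<le> E" and lim: "pointwise_LIMSEQ P q"
    and coercive: "\<And>M. \<exists>F. finite F \<and> (\<forall>x. x \<notin> F \<longrightarrow> M \<le> a x \<and> M \<le> b x)"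
  shows "(\<lambda>k. l2sq (psub q (P k))) \<longlonglongrightarrow> 0"
proof (rule LIMSEQ_I)
  fix \<epsilon> :: real assume \<epsilon>: "\<epsilon> > 0"
  have E: "E \<ge> 0" using q(2) energy_nonneg[of q] by simp
  define M where "M = 8 * (E + 1) / (lam * \<epsilon>)"
  have M: "M > 0" using E lam_pos \<epsilon> unfolding M_def by simp
  have lM: "lam * M = 8 * (E + 1) / \<epsilon>" unfolding M_def using lam_pos by simp
  have "E + 1 > 0" using E by simp
  then have "4 * E / (lam * M) = \<epsilon> * E / (2 * (E + 1))" unfolding lM using \<epsilon> by (simp add: field_simps)
  also have "\<dots> < \<epsilon> / 2" using \<epsilon> E by (simp add: field_simps)
  finally have tail: "4 * E / (lam * M) < \<epsilon> / 2" .
  obtain F where F: "finite F" "\<And>x. x \<notin> F \<Longrightarrow> M \<le> a x \<and> M \<le> b x" using coercive by blast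
  have "(\<lambda>k. \<Sum>x\<in>F. mu x * ((fst q x - fst (P k) x)\<^sup>2 + (snd q x - snd (P k) x)\<^sup>2))
      \<longlonglongrightarrow> (\<Sum>x\<in>F. mu x * ((fst q x - fst q x)\<^sup>2 + (snd q x - snd q x)\<^sup>2))"
    using lim unfolding pointwise_LIMSEQ_def by (intro tendsto_intros) auto
  then obtain N where N: "\<And>k. k \<ge> N \<Longrightarrow>
      (\<Sum>x\<in>F. mu x * ((fst q x - fst (P k) x)\<^sup>2 + (snd q x - snd (P k) x)\<^sup>2)) < \<epsilon> / 2"
    using LIMSEQ_D[of _ 0 "\<epsilon> / 2"] \<epsilon> by fastforce
  show "\<exists>N. \<forall>k\<ge>N. norm (l2sq (psub q (P k)) - 0) < \<epsilon>"
  proof (intro exI allI impI)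
    fix k assume "k \<ge> N"
    moreover have "l2sq (psub q (P k))
        \<le> (\<Sum>x\<in>F. mu x * ((fst q x - fst (P k) x)\<^sup>2 + (snd q x - snd (P k) x)\<^sup>2)) + 4 * E / (lam * M)"
      by (rule l2sq_psub_le_finite_part[OF P(1,2) q F(1) M]) (use F(2) in blast)
    ultimately show "norm (l2sq (psub q (P k)) - 0) < \<epsilon>"
      using N tail l2sq_nonneg[of "psub q (P k)"] by fastforce
  qed
qed

end

section \<open>The functional\<close>

locale coupled_energy = graph_energy w mu a b lam mu_min
  for w :: "'v \<Rightarrow> 'v \<Rightarrow> real" and mu a b :: "'v \<Rightarrow> real" and lam mu_min :: real +
  fixes \<alpha> \<beta> :: real
  assumes alpha_gt_1: "\<alpha> > 1" and beta_gt_1: "\<beta> > 1"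
begin

abbreviation J :: "'v pairfun \<Rightarrow> real" where "J \<equiv> J_lam w mu a b lam \<alpha> \<beta>"

definition coupling_density :: "'v pairfun \<Rightarrow> 'v \<Rightarrow> real" where
  "coupling_density p x = \<bar>fst p x\<bar> powr \<alpha> * \<bar>snd p x\<bar> powr \<beta>"

definition coupling :: "'v pairfun \<Rightarrow> real" where
  "coupling p = infsum (\<lambda>x. mu x * coupling_density p x) UNIV"

definition cross_density :: "'v pairfun \<Rightarrow> 'v pairfun \<Rightarrow> 'v \<Rightarrow> real" where
  "cross_density p h x = (\<bar>fst h x\<bar> + \<bar>snd h x\<bar>) * (\<bar>fst p x\<bar> + \<bar>snd p x\<bar> + \<bar>snd h x\<bar>)"

text \<open>A Lipschitz constant of the coupling term, relative to \<open>L\<^sup>2\<close>, on the set of energy at most \<open>E\<close>;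
  \<open>2 * sqrt (E / mu_min)\<close> bounds all values of \<open>p + t h\<close> there, for \<open>\<bar>t\<bar> \<le> 1\<close>.\<close>

definition coupling_lip :: "real \<Rightarrow> real" where
  "coupling_lip E = (\<alpha> + \<beta>) * ((2 * sqrt (E / mu_min)) powr (\<alpha> - 1) * (2 * sqrt (E / mu_min)) powr (\<beta> - 1))
     * sqrt (12 * E)"

lemma J_eq: "J p = energy p / 2 - coupling p / (\<alpha> + \<beta>)"
  unfolding J_lam_def H_norm_eq_sqrt_energy coupling_def integral_V_def coupling_density_def
  using energy_nonneg[of p] by simp

lemma coupling_density_pscale: "coupling_density (pscale c p) x = \<bar>c\<bar> powr (\<alpha> + \<beta>) * coupling_density p x"
  unfolding coupling_density_def by (simp add: abs_mult powr_mult powr_add)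

lemma coupling_pscale: "coupling (pscale c p) = \<bar>c\<bar> powr (\<alpha> + \<beta>) * coupling p"
  unfolding coupling_def coupling_density_pscale
  by (simp add: mult.left_commute[of "mu _"] infsum_cmult_right')

lemma summable_coupling_density:
  assumes p: "finite_energy p" shows "(\<lambda>x. mu x * coupling_density p x) summable_on UNIV"
proof -
  define R where "R = sqrt (energy p / mu_min)"
  define C where "C = R powr (\<alpha> - 1) * R powr (\<beta> - 1)"
  have bound: "coupling_density p x \<le> C * ((fst p x)\<^sup>2 + (snd p x)\<^sup>2)" for x
  proof -
    have "coupling_density p x \<le> (R powr (\<alpha> - 1) * \<bar>fst p x\<bar>) * (R powr (\<beta> - 1) * \<bar>snd p x\<bar>)"
      unfolding coupling_density_def R_def using abs_le_sqrt_energy[OF p, of x] alpha_gt_1 beta_gt_1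
      by (intro mult_mono powr_le_powr_bound_mult) auto
    also have "\<dots> = C * (\<bar>fst p x\<bar> * \<bar>snd p x\<bar>)" unfolding C_def by (simp add: mult_ac)
    also have "\<dots> \<le> C * ((fst p x)\<^sup>2 + (snd p x)\<^sup>2)"
    proof (rule mult_left_mono)
      have "2 * (\<bar>fst p x\<bar> * \<bar>snd p x\<bar>) \<le> (fst p x)\<^sup>2 + (snd p x)\<^sup>2"
        using sum_squares_bound[of "\<bar>fst p x\<bar>" "\<bar>snd p x\<bar>"] by (simp add: mult.assoc)
      moreover have "0 \<le> \<bar>fst p x\<bar> * \<bar>snd p x\<bar>" by simp
      ultimately show "\<bar>fst p x\<bar> * \<bar>snd p x\<bar> \<le> (fst p x)\<^sup>2 + (snd p x)\<^sup>2" by linarith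
    qed (simp add: C_def)
    finally show ?thesis .
  qed
  have "(\<lambda>x. C * (mu x * ((fst p x)\<^sup>2 + (snd p x)\<^sup>2))) summable_on UNIV"
    by (intro summable_on_cmult_right summable_l2sq p)
  then show ?thesis
  proof (rule summable_on_comparison_test)
    fix x
    show "mu x * coupling_density p x \<le> C * (mu x * ((fst p x)\<^sup>2 + (snd p x)\<^sup>2))"
      using mult_left_mono[OF bound[of x] less_imp_le[OF mu_pos[of x]]] by (simp add: mult_ac)
    show "0 \<le> mu x * coupling_density p x" using mu_pos[of x] by (simp add: coupling_density_def)
  qed
qed

lemma coupling_density_padd_pscale_diff_le:
  assumes t: "\<bar>t\<bar> \<le> 1" and S: "\<bar>fst p x\<bar> \<le> S" "\<bar>snd p x\<bar> \<le> S" "\<bar>fst h x\<bar> \<le> S" "\<bar>snd h x\<bar> \<le> S"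
  shows "\<bar>coupling_density (padd p (pscale t h)) x - coupling_density p x\<bar>
    \<le> \<bar>t\<bar> * ((\<alpha> + \<beta>) * ((2 * S) powr (\<alpha> - 1) * (2 * S) powr (\<beta> - 1))) * cross_density p h x"
proof -
  define L where "L = (\<alpha> + \<beta>) * ((2 * S) powr (\<alpha> - 1) * (2 * S) powr (\<beta> - 1))"
  have L: "L \<ge> 0" unfolding L_def using alpha_gt_1 beta_gt_1 by simp
  have th: "\<bar>t * y\<bar> \<le> \<bar>y\<bar>" for y using t by (simp add: abs_mult mult_left_le_one_le)
  have small: "\<bar>snd p x + t * snd h x\<bar> \<le> \<bar>snd p x\<bar> + \<bar>snd h x\<bar>"
    using th[of "snd h x"] abs_triangle_ineq[of "snd p x" "t * snd h x"] by linarith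
  have "\<bar>fst p x + t * fst h x\<bar> \<le> 2 * S" "\<bar>snd p x + t * snd h x\<bar> \<le> 2 * S"
    using S th[of "fst h x"] th[of "snd h x"]
      abs_triangle_ineq[of "fst p x" "t * fst h x"] abs_triangle_ineq[of "snd p x" "t * snd h x"] by linarith+
  then have "\<bar>coupling_density (padd p (pscale t h)) x - coupling_density p x\<bar>
      \<le> L * (\<bar>(fst p x + t * fst h x) - fst p x\<bar> + \<bar>(snd p x + t * snd h x) - snd p x\<bar>)
        * (\<bar>fst p x\<bar> + \<bar>snd p x + t * snd h x\<bar>)"
    using abs_powr_mult_abs_powr_diff_le[of \<alpha> \<beta> "fst p x" "2 * S" "fst p x + t * fst h x" "snd p x"
        "snd p x + t * snd h x"] alpha_gt_1 beta_gt_1 S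
    unfolding coupling_density_def L_def by simp
  then have "\<bar>coupling_density (padd p (pscale t h)) x - coupling_density p x\<bar>
      \<le> L * (\<bar>t * fst h x\<bar> + \<bar>t * snd h x\<bar>) * (\<bar>fst p x\<bar> + \<bar>snd p x + t * snd h x\<bar>)"
    by simp
  also have "\<dots> = L * (\<bar>t\<bar> * (\<bar>fst h x\<bar> + \<bar>snd h x\<bar>)) * (\<bar>fst p x\<bar> + \<bar>snd p x + t * snd h x\<bar>)"
    by (simp add: abs_mult distrib_left)
  also have "\<dots> \<le> L * (\<bar>t\<bar> * (\<bar>fst h x\<bar> + \<bar>snd h x\<bar>)) * (\<bar>fst p x\<bar> + \<bar>snd p x\<bar> + \<bar>snd h x\<bar>)"
    using small L by (intro mult_left_mono) auto
  finally show ?thesis unfolding L_def cross_density_def by (simp add: mult_ac)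
qed

lemma cross_density_Cauchy_Schwarz:
  assumes p: "finite_energy p" "energy p \<le> E" and h: "finite_energy h" "energy h \<le> E"
  shows "(\<lambda>x. mu x * cross_density p h x) summable_on UNIV"
    and "infsum (\<lambda>x. mu x * cross_density p h x) UNIV \<le> sqrt (12 * E) * sqrt (l2sq h)"
proof -
  define f where "f x = \<bar>fst h x\<bar> + \<bar>snd h x\<bar>" for x
  define g where "g x = \<bar>fst p x\<bar> + \<bar>snd p x\<bar> + \<bar>snd h x\<bar>" for x
  have fg: "cross_density p h x = f x * g x" for x unfolding cross_density_def f_def g_def ..
  have f2: "(f x)\<^sup>2 \<le> 2 * ((fst h x)\<^sup>2 + (snd h x)\<^sup>2)" for x
    unfolding f_def by (rule sq_abs_add_le(1))
  have g2: "(g x)\<^sup>2 \<le> 3 * (((fst p x)\<^sup>2 + (snd p x)\<^sup>2) + ((fst h x)\<^sup>2 + (snd h x)\<^sup>2))" for x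
    unfolding g_def by (rule order_trans[OF sq_abs_add_le(2)]) (simp add: algebra_simps)
  note Lp = summable_l2sq[OF p(1)] and Lh = summable_l2sq[OF h(1)]
  have m: "mu x \<ge> 0" for x using mu_pos less_imp_le by blast
  note Lh2 = summable_on_cmult_right[OF Lh, of 2]
  and Lph3 = summable_on_cmult_right[OF summable_on_add[OF Lp Lh], of 3]
  have f2': "mu x * (f x)\<^sup>2 \<le> 2 * (mu x * ((fst h x)\<^sup>2 + (snd h x)\<^sup>2))" for x
    using mult_left_mono[OF f2[of x] m[of x]] by (simp add: mult.left_commute)
  have g2': "mu x * (g x)\<^sup>2 \<le> 3 * (mu x * ((fst p x)\<^sup>2 + (snd p x)\<^sup>2) + mu x * ((fst h x)\<^sup>2 + (snd h x)\<^sup>2))" for x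
    using mult_left_mono[OF g2[of x] m[of x]] by (simp add: algebra_simps)
  have sf: "(\<lambda>x. mu x * (f x)\<^sup>2) summable_on UNIV"
    by (rule summable_on_comparison_test[OF Lh2 f2']) (simp add: m)
  have sg: "(\<lambda>x. mu x * (g x)\<^sup>2) summable_on UNIV"
    by (rule summable_on_comparison_test[OF Lph3 g2']) (simp add: m)
  have if2: "infsum (\<lambda>x. mu x * (f x)\<^sup>2) UNIV \<le> 2 * l2sq h"
    unfolding l2sq_def infsum_cmult_right'[symmetric] by (rule infsum_mono[OF sf Lh2 f2'])
  have ig2: "infsum (\<lambda>x. mu x * (g x)\<^sup>2) UNIV \<le> 3 * (l2sq p + l2sq h)"
    unfolding l2sq_def infsum_cmult_right'[symmetric] infsum_add[OF Lp Lh, symmetric]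
    by (rule infsum_mono[OF sg Lph3 g2'])
  show "(\<lambda>x. mu x * cross_density p h x) summable_on UNIV"
    unfolding fg by (rule Cauchy_Schwarz_infsum(1)[OF m _ _ sf sg]) (auto simp: f_def g_def)
  have "infsum (\<lambda>x. mu x * cross_density p h x) UNIV
      \<le> sqrt (infsum (\<lambda>x. mu x * (f x)\<^sup>2) UNIV) * sqrt (infsum (\<lambda>x. mu x * (g x)\<^sup>2) UNIV)"
    unfolding fg by (rule Cauchy_Schwarz_infsum(2)[OF m _ _ sf sg]) (auto simp: f_def g_def)
  also have "\<dots> \<le> sqrt (2 * l2sq h) * sqrt (6 * E)"
    using if2 ig2 l2sq_le_energy[OF p(1)] l2sq_le_energy[OF h(1)] p(2) h(2) l2sq_nonneg[of h] m
    by (intro mult_mono real_sqrt_le_mono) (auto intro: infsum_nonneg)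
  also have "\<dots> = sqrt (12 * E) * sqrt (l2sq h)"
    by (simp add: real_sqrt_mult[symmetric] mult_ac)
  finally show "infsum (\<lambda>x. mu x * cross_density p h x) UNIV \<le> sqrt (12 * E) * sqrt (l2sq h)" .
qed

lemma coupling_padd_pscale_diff_le:
  assumes p: "finite_energy p" "energy p \<le> E" and h: "finite_energy h" "energy h \<le> E" and t: "\<bar>t\<bar> \<le> 1"
  shows "\<bar>coupling (padd p (pscale t h)) - coupling p\<bar> \<le> \<bar>t\<bar> * coupling_lip E * sqrt (l2sq h)"
proof -
  define S where "S = sqrt (E / mu_min)"
  define L where "L = (\<alpha> + \<beta>) * ((2 * S) powr (\<alpha> - 1) * (2 * S) powr (\<beta> - 1))"
  define q where "q = padd p (pscale t h)"
  define d where "d x = mu x * coupling_density q x + - (mu x * coupling_density p x)" for x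
  define g where "g x = \<bar>t\<bar> * L * (mu x * cross_density p h x)" for x
  have L: "L \<ge> 0" unfolding L_def using alpha_gt_1 beta_gt_1 by simp
  have S: "\<bar>fst r x\<bar> \<le> S" "\<bar>snd r x\<bar> \<le> S" if "finite_energy r" "energy r \<le> E" for r x
  proof -
    have "sqrt (energy r / mu_min) \<le> S"
      unfolding S_def using that(2) mu_min_pos by (intro real_sqrt_le_mono divide_right_mono) auto
    then show "\<bar>fst r x\<bar> \<le> S" "\<bar>snd r x\<bar> \<le> S" using abs_le_sqrt_energy[OF that(1), of x] by auto
  qed
  have dg: "\<bar>d x\<bar> \<le> g x" for x
    using mult_left_mono[OF coupling_density_padd_pscale_diff_le[OF t S(1)[OF p, of x] S(2)[OF p, of x] S(1)[OF h, of x] S(2)[OF h, of x]]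
        less_imp_le[OF mu_pos[of x]]]
    unfolding d_def g_def q_def L_def[symmetric]
    by (simp add: abs_mult abs_of_pos[OF mu_pos] right_diff_distrib[symmetric] mult_ac)
  have sq: "(\<lambda>x. mu x * coupling_density q x) summable_on UNIV"
    unfolding q_def by (intro summable_coupling_density finite_energy_padd finite_energy_pscale p h)
  have sp: "(\<lambda>x. - (mu x * coupling_density p x)) summable_on UNIV"
    by (rule summable_on_uminus[THEN iffD2, OF summable_coupling_density[OF p(1)]])
  have sd: "d summable_on UNIV" unfolding d_def using summable_on_add[OF sq sp] .
  have sg: "g summable_on UNIV" unfolding g_def by (intro summable_on_cmult_right cross_density_Cauchy_Schwarz(1)[OF p h])
  have "coupling q - coupling p = infsum d UNIV"
    unfolding d_def infsum_add[OF sq sp] infsum_uminus coupling_def by simp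
  moreover have "infsum d UNIV \<le> infsum g UNIV" using dg by (intro infsum_mono[OF sd sg]) (simp add: abs_le_iff)
  moreover have "- infsum g UNIV \<le> infsum d UNIV"
    unfolding infsum_uminus[symmetric]
  proof (rule infsum_mono[OF summable_on_uminus[THEN iffD2, OF sg] sd])
    show "- g x \<le> d x" for x using dg[of x] by linarith
  qed
  moreover have "infsum g UNIV \<le> \<bar>t\<bar> * L * (sqrt (12 * E) * sqrt (l2sq h))"
    unfolding g_def infsum_cmult_right' using L
    by (intro mult_left_mono cross_density_Cauchy_Schwarz(2)[OF p h]) auto
  moreover have "\<bar>t\<bar> * L * (sqrt (12 * E) * sqrt (l2sq h)) = \<bar>t\<bar> * coupling_lip E * sqrt (l2sq h)"
    unfolding coupling_lip_def L_def S_def by (simp only: mult.assoc)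
  ultimately show ?thesis unfolding q_def abs_le_iff by linarith
qed

lemma J_deriv_self:
  assumes fr: "frechet_deriv_H Hspace Hnorm J p D" and p: "finite_energy p"
  shows "D p = energy p - coupling p"
proof -
  define A where "A = energy p / 2"
  define B where "B = coupling p / (\<alpha> + \<beta>)"
  define g where "g t = (1 + t)\<^sup>2 * A - (1 + t) powr (\<alpha> + \<beta>) * B" for t :: real
  have "(g has_field_derivative (2 * A - (\<alpha> + \<beta>) * B)) (at 0)"
    unfolding g_def by (auto intro!: derivative_eq_intros)
  then have g': "((\<lambda>t. (g t - g 0) / t) \<longlongrightarrow> 2 * A - (\<alpha> + \<beta>) * B) (at 0)"
    unfolding has_field_derivative_iff by simp
  have ev: "\<forall>\<^sub>F t in at 0. (g t - g 0) / t = (J (padd p (pscale t p)) - J p) / t"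
    unfolding eventually_at
  proof (intro exI[of _ 1] conjI ballI impI)
    fix t :: real assume "t \<noteq> 0 \<and> dist t 0 < 1"
    then have "1 + t > 0" by (auto simp: dist_real_def)
    moreover have eq: "padd p (pscale t p) = pscale (1 + t) p" by (simp add: padd_def pscale_def algebra_simps)
    ultimately show "(g t - g 0) / t = (J (padd p (pscale t p)) - J p) / t"
      unfolding g_def A_def B_def J_eq eq energy_pscale coupling_pscale by simp
  qed simp
  have "D p = 2 * A - (\<alpha> + \<beta>) * B"
    using tendsto_unique[OF _ frechet_deriv_H_directional[OF fr p] tendsto_cong[OF ev, THEN iffD1, OF g']] by simp
  then show ?thesis unfolding A_def B_def using alpha_gt_1 beta_gt_1 by simp
qed

lemma J_deriv_pairing_diff_le:
  assumes fr: "frechet_deriv_H Hspace Hnorm J p D" and p: "finite_energy p" "energy p \<le> E"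
    and h: "finite_energy h" "energy h \<le> E"
  shows "\<bar>D h - pairing p h\<bar> \<le> coupling_lip E * sqrt (l2sq h) / (\<alpha> + \<beta>)"
proof -
  have ab: "\<alpha> + \<beta> > 0" using alpha_gt_1 beta_gt_1 by simp
  define f where "f t = (J (padd p (pscale t h)) - J p) / t" for t
  have "((\<lambda>t. \<bar>f t - pairing p h\<bar> - \<bar>t\<bar> * energy h / 2) \<longlongrightarrow> \<bar>D h - pairing p h\<bar> - \<bar>0\<bar> * energy h / 2) (at 0)"
    unfolding f_def by (intro tendsto_intros frechet_deriv_H_directional[OF fr h(1)]) simp_all
  then have lim: "((\<lambda>t. \<bar>f t - pairing p h\<bar> - \<bar>t\<bar> * energy h / 2) \<longlongrightarrow> \<bar>D h - pairing p h\<bar>) (at 0)"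
    by simp
  have "\<forall>\<^sub>F t in at 0. \<bar>f t - pairing p h\<bar> - \<bar>t\<bar> * energy h / 2 \<le> coupling_lip E * sqrt (l2sq h) / (\<alpha> + \<beta>)"
    unfolding eventually_at
  proof (intro exI[of _ 1] conjI ballI impI)
    fix t :: real assume "t \<noteq> 0 \<and> dist t 0 < 1"
    then have t: "t \<noteq> 0" "\<bar>t\<bar> \<le> 1" by (auto simp: dist_real_def)
    define \<Delta> where "\<Delta> = coupling (padd p (pscale t h)) - coupling p"
    have diff: "J (padd p (pscale t h)) - J p = t * pairing p h + t\<^sup>2 * energy h / 2 - \<Delta> / (\<alpha> + \<beta>)"
      unfolding J_eq energy_padd_pscale[OF p(1) h(1)] \<Delta>_def by (simp add: algebra_simps diff_divide_distrib)
    have "f t - pairing p h = t * energy h / 2 - \<Delta> / (t * (\<alpha> + \<beta>))"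
    proof -
      have "\<alpha> * t + \<beta> * t \<noteq> 0" using t(1) ab by (simp add: distrib_right[symmetric])
      then show ?thesis unfolding f_def diff using t(1) ab by (simp add: field_simps power2_eq_square)
    qed
    then have "\<bar>f t - pairing p h\<bar> \<le> \<bar>t * energy h / 2\<bar> + \<bar>\<Delta> / (t * (\<alpha> + \<beta>))\<bar>"
      by (metis abs_triangle_ineq4)
    also have "\<dots> = \<bar>t\<bar> * energy h / 2 + \<bar>\<Delta>\<bar> / (\<bar>t\<bar> * (\<alpha> + \<beta>))"
      using energy_nonneg[of h] ab by (simp add: abs_mult abs_divide)
    also have "\<bar>\<Delta>\<bar> / (\<bar>t\<bar> * (\<alpha> + \<beta>)) \<le> \<bar>t\<bar> * coupling_lip E * sqrt (l2sq h) / (\<bar>t\<bar> * (\<alpha> + \<beta>))"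
      unfolding \<Delta>_def using coupling_padd_pscale_diff_le[OF p h t(2)] t(1) ab by (intro divide_right_mono) auto
    finally show "\<bar>f t - pairing p h\<bar> - \<bar>t\<bar> * energy h / 2 \<le> coupling_lip E * sqrt (l2sq h) / (\<alpha> + \<beta>)"
      using t(1) by simp
  qed simp
  then show ?thesis by (rule tendsto_upperbound[OF lim]) simp
qed

lemma PS_sequence_energy_bounded:
  assumes p: "finite_energy p" and fr: "frechet_deriv_H Hspace Hnorm J p D"
    and CJ: "\<bar>J p\<bar> \<le> CJ" and CD: "\<bar>dual_norm Hspace Hnorm D\<bar> \<le> CD"
  shows "energy p \<le> (max 1 ((CJ + CD / (\<alpha> + \<beta>)) / (1 / 2 - 1 / (\<alpha> + \<beta>))))\<^sup>2"
proof -
  define \<gamma> where "\<gamma> = \<alpha> + \<beta>"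
  define c where "c = 1 / 2 - 1 / \<gamma>"
  have \<gamma>: "\<gamma> > 2" unfolding \<gamma>_def using alpha_gt_1 beta_gt_1 by simp
  then have c: "c > 0" unfolding c_def by (simp add: field_simps)
  have "\<bar>D p\<bar> \<le> dual_norm Hspace Hnorm D * sqrt (energy p)"
    using frechet_deriv_H_abs_le_dual_norm[OF fr p] unfolding H_norm_eq_sqrt_energy .
  also have "\<dots> \<le> CD * sqrt (energy p)" using CD energy_nonneg[of p] by (intro mult_right_mono) auto
  finally have Dp: "\<bar>D p\<bar> \<le> CD * sqrt (energy p)" .
  have "c * energy p = J p - D p / \<gamma>"
    unfolding J_eq J_deriv_self[OF fr p] c_def \<gamma>_def by (simp add: algebra_simps diff_divide_distrib)
  also have "\<dots> \<le> CJ + CD / \<gamma> * sqrt (energy p)"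
  proof -
    have "- D p / \<gamma> \<le> CD * sqrt (energy p) / \<gamma>" using Dp \<gamma> by (intro divide_right_mono) auto
    then show ?thesis using CJ by (simp add: abs_le_iff)
  qed
  finally have "c * (sqrt (energy p))\<^sup>2 \<le> CJ + CD / \<gamma> * sqrt (energy p)"
    using energy_nonneg[of p] by simp
  then have "sqrt (energy p) \<le> max 1 ((CJ + CD / \<gamma>) / c)"
    using c CJ CD \<gamma> energy_nonneg[of p] by (intro le_max_of_quadratic_le) auto
  then have "(sqrt (energy p))\<^sup>2 \<le> (max 1 ((CJ + CD / \<gamma>) / c))\<^sup>2"
    using energy_nonneg[of p] by (intro power_mono) auto
  then show ?thesis unfolding \<gamma>_def[symmetric] c_def[symmetric] using energy_nonneg[of p] by simp
qed

lemma PS_pairing_tendsto_zero: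
  assumes P: "\<And>k. finite_energy (P k)" "\<And>k. energy (P k) \<le> E"
    and h: "\<And>k. finite_energy (h k)" "\<And>k. energy (h k) \<le> E" and l2: "(\<lambda>k. l2sq (h k)) \<longlonglongrightarrow> 0"
    and fr: "\<And>k. frechet_deriv_H Hspace Hnorm J (P k) (D k)"
    and dual: "(\<lambda>k. dual_norm Hspace Hnorm (D k)) \<longlonglongrightarrow> 0"
  shows "(\<lambda>k. pairing (P k) (h k)) \<longlonglongrightarrow> 0"
proof (rule Lim_null_comparison)
  show "\<forall>\<^sub>F k in sequentially. norm (pairing (P k) (h k))
      \<le> \<bar>dual_norm Hspace Hnorm (D k)\<bar> * sqrt E + coupling_lip E * sqrt (l2sq (h k)) / (\<alpha> + \<beta>)"
  proof (rule always_eventually, rule allI)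
    fix k
    have "\<bar>D k (h k)\<bar> \<le> dual_norm Hspace Hnorm (D k) * Hnorm (h k)"
      by (rule frechet_deriv_H_abs_le_dual_norm[OF fr h(1)])
    also have "\<dots> \<le> \<bar>dual_norm Hspace Hnorm (D k)\<bar> * sqrt E"
      unfolding H_norm_eq_sqrt_energy using h(2)[of k] energy_nonneg[of "h k"]
      by (intro mult_mono) auto
    finally show "norm (pairing (P k) (h k))
        \<le> \<bar>dual_norm Hspace Hnorm (D k)\<bar> * sqrt E + coupling_lip E * sqrt (l2sq (h k)) / (\<alpha> + \<beta>)"
      using J_deriv_pairing_diff_le[OF fr[of k] P(1)[of k] P(2)[of k] h(1)[of k] h(2)[of k]]
      unfolding real_norm_def by arith
  qed
  show "(\<lambda>k. \<bar>dual_norm Hspace Hnorm (D k)\<bar> * sqrt E + coupling_lip E * sqrt (l2sq (h k)) / (\<alpha> + \<beta>))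
      \<longlonglongrightarrow> 0"
  proof (intro tendsto_add_zero tendsto_mult_left_zero tendsto_rabs_zero dual tendsto_divide_zero
      tendsto_mult_right_zero)
    show "(\<lambda>k. sqrt (l2sq (h k))) \<longlonglongrightarrow> 0" using tendsto_real_sqrt[OF l2] by simp
  qed
qed

lemma PS_strong_convergence:
  assumes P: "\<And>k. finite_energy (P k)" "\<And>k. energy (P k) \<le> E"
    and q: "finite_energy q" "energy q \<le> E" and lim: "pointwise_LIMSEQ P q"
    and coercive: "\<And>M. \<exists>F. finite F \<and> (\<forall>x. x \<notin> F \<longrightarrow> M \<le> a x \<and> M \<le> b x)"
    and fr: "\<And>k. frechet_deriv_H Hspace Hnorm J (P k) (D k)"
    and dual: "(\<lambda>k. dual_norm Hspace Hnorm (D k)) \<longlonglongrightarrow> 0"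
  shows "(\<lambda>k. energy (psub (P k) q)) \<longlonglongrightarrow> 0"
proof -
  define h where "h k = psub q (P k)" for k
  have E: "E \<ge> 0" using q(2) energy_nonneg[of q] by simp
  have h: "finite_energy (h k)" "energy (h k) \<le> 4 * E" for k
  proof -
    show "finite_energy (h k)" unfolding h_def by (intro finite_energy_psub q P)
    have "energy (h k) \<le> 2 * energy q + 2 * energy (pscale (-1) (P k))"
      unfolding h_def psub_eq_padd_pscale by (intro energy_padd_le finite_energy_pscale q P)
    then show "energy (h k) \<le> 4 * E" using q(2) P(2)[of k] by (simp add: energy_pscale)
  qed
  have pairing_lim: "(\<lambda>k. pairing (P k) (h k)) \<longlonglongrightarrow> 0"
  proof (rule PS_pairing_tendsto_zero[OF P(1) _ h(1) h(2) _ fr dual])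
    show "energy (P k) \<le> 4 * E" for k using P(2)[of k] E by simp
    show "(\<lambda>k. l2sq (h k)) \<longlonglongrightarrow> 0"
      unfolding h_def by (rule l2sq_psub_tendsto_zero[OF P q lim coercive])
  qed
  show ?thesis
  proof (rule tendstoI)
    fix \<epsilon> :: real assume \<epsilon>: "\<epsilon> > 0"
    have "\<forall>\<^sub>F k in sequentially. \<bar>pairing (P k) (h k)\<bar> < \<epsilon> / 4"
      using tendstoD[OF pairing_lim, of "\<epsilon> / 4"] \<epsilon> by (simp add: dist_real_def)
    moreover have "\<forall>\<^sub>F k in sequentially. energy q - \<epsilon> / 2 < energy (P k)"
      using \<epsilon> by (intro energy_lower_semicontinuous[OF P(1) q(1) lim]) simp
    ultimately show "\<forall>\<^sub>F k in sequentially. dist (energy (psub (P k) q)) 0 < \<epsilon>"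
    proof eventually_elim
      case (elim k)
      then show ?case
        using energy_psub_eq[OF P(1)[of k] q(1)] energy_nonneg[of "psub (P k) q"]
        unfolding h_def dist_real_def by arith
    qed
  qed
qed

lemma Palais_Smale:
  fixes p :: "nat \<Rightarrow> 'v pairfun"
  assumes countable: "countable (UNIV :: 'v set)"
    and coercive: "\<And>M. \<exists>F. finite F \<and> (\<forall>x. x \<notin> F \<longrightarrow> M \<le> a x \<and> M \<le> b x)"
    and p: "\<And>k. p k \<in> Hspace" and Jc: "(\<lambda>k. J (p k)) \<longlonglongrightarrow> c"
    and fr: "\<And>k. frechet_deriv_H Hspace Hnorm J (p k) (D k)"
    and dual: "(\<lambda>k. dual_norm Hspace Hnorm (D k)) \<longlonglongrightarrow> 0"
  shows "(\<exists>M. \<forall>k. Hnorm (p k) \<le> M) \<and> (\<exists>r q. strict_mono r \<and> q \<in> Hspace \<and> (\<lambda>k. Hnorm (psub (p (r k)) q)) \<longlonglongrightarrow> 0)"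
proof -
  have fin: "finite_energy (p k)" for k using p H_lam_iff_finite_energy by blast
  obtain CJ where "\<forall>k. norm (J (p k)) \<le> CJ"
    using BseqE[OF convergent_imp_Bseq[OF convergentI[OF Jc]]] by blast
  then have CJ: "\<bar>J (p k)\<bar> \<le> CJ" for k by simp
  obtain CD where "\<forall>k. norm (dual_norm Hspace Hnorm (D k)) \<le> CD"
    using BseqE[OF convergent_imp_Bseq[OF convergentI[OF dual]]] by blast
  then have CD: "\<bar>dual_norm Hspace Hnorm (D k)\<bar> \<le> CD" for k by simp
  define E where "E = (max 1 ((CJ + CD / (\<alpha> + \<beta>)) / (1 / 2 - 1 / (\<alpha> + \<beta>))))\<^sup>2"
  have E: "energy (p k) \<le> E" for k
    unfolding E_def by (rule PS_sequence_energy_bounded[OF fin fr CJ CD])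
  obtain r q where r: "strict_mono r" and q: "finite_energy q" "energy q \<le> E"
    and lim: "pointwise_LIMSEQ (p \<circ> r) q"
    using energy_bounded_pointwise_convergent_subseq[where p=p and E=E, OF countable fin E]
    by (elim exE conjE) (rule that; assumption)
  have "(\<lambda>k. energy (psub ((p \<circ> r) k) q)) \<longlonglongrightarrow> 0"
  proof (rule PS_strong_convergence[OF _ _ q lim coercive])
    show "frechet_deriv_H Hspace Hnorm J ((p \<circ> r) k) ((D \<circ> r) k)" for k using fr by simp
    show "(\<lambda>k. dual_norm Hspace Hnorm ((D \<circ> r) k)) \<longlonglongrightarrow> 0"
      using LIMSEQ_subseq_LIMSEQ[OF dual r] by (simp add: o_def)
  qed (use fin E in simp_all)
  then have "(\<lambda>k. sqrt (energy (psub (p (r k)) q))) \<longlonglongrightarrow> sqrt 0"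
    by (intro tendsto_real_sqrt) (simp add: o_def)
  then have "(\<lambda>k. Hnorm (psub (p (r k)) q)) \<longlonglongrightarrow> 0"
    unfolding H_norm_eq_sqrt_energy by simp
  moreover have "Hnorm (p k) \<le> sqrt E" for k unfolding H_norm_eq_sqrt_energy using E[of k] by simp
  moreover have "q \<in> Hspace" using q(1) H_lam_iff_finite_energy by blast
  ultimately show ?thesis using r by blast
qed

end

theorem lemma3p1:
  fixes w :: "'v \<Rightarrow> 'v \<Rightarrow> real" and mu a b :: "'v \<Rightarrow> real"
    and lam \<alpha> \<beta> :: real
  assumes G: "weighted_graph w mu"
    and alpha: "\<alpha> > 1" and beta: "\<beta> > 1" and lam: "lam > 0"
    and a_nn: "\<forall>x. a x \<ge> 0" and b_nn: "\<forall>x. b x \<ge> 0"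
    and A1a: "bounded_domain w {x. a x = 0}"
    and A1b: "bounded_domain w {x. b x = 0}"
    and A1ab: "bounded_domain w {x. a x = 0 \<and> b x = 0}"
    and A2: "\<exists>x0. \<forall>M. \<exists>R. \<forall>x. gdist w x0 x > R \<longrightarrow> a x \<ge> M \<and> b x \<ge> M"
  shows "\<forall>(c::real) (p :: nat \<Rightarrow> 'v pairfun) (D :: nat \<Rightarrow> 'v pairfun \<Rightarrow> real).
     (\<forall>k. p k \<in> H_lam w mu a b lam) \<and>
     (\<lambda>k. J_lam w mu a b lam \<alpha> \<beta> (p k)) \<longlonglongrightarrow> c \<and>
     (\<forall>k. frechet_deriv_H (H_lam w mu a b lam) (H_norm w mu a b lam)
            (J_lam w mu a b lam \<alpha> \<beta>) (p k) (D k)) \<and>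
     (\<lambda>k. dual_norm (H_lam w mu a b lam) (H_norm w mu a b lam) (D k)) \<longlonglongrightarrow> 0
     \<longrightarrow>
     (\<exists>M. \<forall>k. H_norm w mu a b lam (p k) \<le> M) \<and>
     (\<exists>r q. strict_mono r \<and> q \<in> H_lam w mu a b lam \<and>
        (\<lambda>k. H_norm w mu a b lam (psub (p (r k)) q)) \<longlonglongrightarrow> 0)"
proof -
  obtain mu_min where "mu_min > 0" "\<forall>x. mu x \<ge> mu_min" using G unfolding weighted_graph_def by blast
  then interpret coupled_energy w mu a b lam mu_min \<alpha> \<beta>
    using G alpha beta lam a_nn b_nn unfolding weighted_graph_def by unfold_locales auto
  obtain x0 where x0: "\<forall>M. \<exists>R. \<forall>x. gdist w x0 x > R \<longrightarrow> a x \<ge> M \<and> b x \<ge> M" using A2 by blast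
  have balls: "finite {x. gdist w x0 x \<le> n}" for n
    using G unfolding weighted_graph_def by (intro finite_gdist_ball) auto
  have "UNIV = (\<Union>n. {x. gdist w x0 x \<le> n})" by auto
  moreover have "countable (\<Union>n. {x. gdist w x0 x \<le> n})"
    by (rule countable_UN) (auto intro: countable_finite balls)
  ultimately have countable: "countable (UNIV :: 'v set)" by simp
  have coercive: "\<exists>F. finite F \<and> (\<forall>x. x \<notin> F \<longrightarrow> M \<le> a x \<and> M \<le> b x)" for M
  proof -
    obtain R where "\<forall>x. gdist w x0 x > R \<longrightarrow> a x \<ge> M \<and> b x \<ge> M" using x0 by blast
    then show ?thesis using balls[of R] by (intro exI[of _ "{x. gdist w x0 x \<le> R}"]) auto
  qed
  show ?thesis using Palais_Smale[OF countable coercive] by blast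
qed
end
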